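(* Let $q$ be a prime power. Let $P_1,\dots,P_n$ be distinct closed points of $\mathbb{P}^2_{\mathbb{F}_q}$ and $L_1,\dots,L_n$ lines defined over $\mathbb{F}_q$ (possibly with repetition) with $P_i\in L_i$ for each $i$. Let $Q_1,\dots,Q_s$ be distinct $\mathbb{F}_q$-points of $\mathbb{P}^2$ such that no $Q_j$ lies on any $L_i$. Then for all sufficiently large $d$, \[ \mu_d\left(\bigcap_{i=1}^n\mathcal{T}_{L_i,P_i}\cap\bigcap_{j=1}^s\mathcal{S}_{Q_j}\right)=q^{-3s-\sum_{i=1}^n 2\deg(P_i)}, \] and consequently the natural density of this intersection exists and equals the same value.
   Context: Let $R=\mathbb{F}_q[x,y,z]$, $R_d$ the homogeneous polynomials of degree $d$ (including $0$), $R_{\mathrm{homog}}=\bigcup_{d\ge1}R_d$, $\mu_d(\mathcal{A})=\#(\mathcal{A}\cap R_d)/\#R_d$, $\mu(\mathcal{A})=\lim_d\mu_d(\mathcal{A})$. For a closed point $P$, $\deg(P)$ is the degree of its residue field over $\mathbb{F}_q$, and $\mathfrak{m}_P$ is the homogeneous ideal of polynomials vanishing at $P$. For an $\mathbb{F}_q$-point $Q$, $\mathcal{S}_Q=\{f\in R_{\mathrm{homog}}: \{f=0\}\text{ is singular at }Q\}$, i.e. $f\in\mathfrak{m}_Q^2$. For an $\mathbb{F}_q$-line $L$ and a closed point $P\in L$, $\mathcal{T}_{L,P}=\{f\in R_{\mathrm{homog}}:\{f=0\}\text{ is tangent to }L\text{ at }P\}$, where "tangent to $L$ at $P$" means the restriction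 of $f$ to $L$ vanishes to order at least $2$ at $P$ (this includes the case that the curve is singular at $P$). *)

theory Defs
  imports Complex_Main "HOL-Computational_Algebra.Polynomial"
begin

type_synonym 'k vec3 = "'k \<times> 'k \<times> 'k"
type_synonym mono3 = "nat \<times> nat \<times> nat"

definition mons3 :: "nat \<Rightarrow> mono3 set" where
  "mons3 d = {(a,b,c). a + b + c = d}"

definition hom_polys :: "'k::field set \<Rightarrow> nat \<Rightarrow> (mono3 \<Rightarrow> 'k) set" where
  "hom_polys F d = {f. (\<forall>m. f m \<in> F) \<and> (\<forall>m. m \<notin> mons3 d \<longrightarrow> f m = 0)}"

definition is_subfield :: "'k::field set \<Rightarrow> bool" where
  "is_subfield F \<longleftrightarrow> 0 \<in> F \<and> 1 \<in> F \<and> (\<forall>x\<in>F. \<forall>y\<in>F. x + y \<in> F \<and> x * y \<in> F)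
     \<and> (\<forall>x\<in>F. - x \<in> F \<and> inverse x \<in> F)"

definition alg_closed :: "'k::field itself \<Rightarrow> bool" where
  "alg_closed _ \<longleftrightarrow> (\<forall>p :: 'k poly. degree p > 0 \<longrightarrow> (\<exists>x. poly p x = 0))"

definition Fvec :: "'k::field set \<Rightarrow> 'k vec3 \<Rightarrow> bool" where
  "Fvec F v \<longleftrightarrow> fst v \<in> F \<and> fst (snd v) \<in> F \<and> snd (snd v) \<in> F"

definition scale3 :: "'k::field \<Rightarrow> 'k vec3 \<Rightarrow> 'k vec3" where
  "scale3 c v = (c * fst v, c * fst (snd v), c * snd (snd v))"

definition dot3 :: "'k::field vec3 \<Rightarrow> 'k vec3 \<Rightarrow> 'k" where
  "dot3 u v = fst u * fst v + fst (snd u) * fst (snd v) + snd (snd u) * snd (snd v)"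

definition proportional :: "'k::field vec3 \<Rightarrow> 'k vec3 \<Rightarrow> bool" where
  "proportional u v \<longleftrightarrow> (\<exists>c. c \<noteq> 0 \<and> v = scale3 c u)"

(* The geometric point (line through v) determined by a nonzero vector. *)
definition ppt :: "'k::field vec3 \<Rightarrow> 'k vec3 set" where
  "ppt v = {scale3 c v | c. c \<noteq> 0}"

definition frobv :: "nat \<Rightarrow> 'k::field vec3 \<Rightarrow> 'k vec3" where
  "frobv q v = (fst v ^ q, fst (snd v) ^ q, snd (snd v) ^ q)"

(* v represents a closed point of P^2 over F_q: nonzero, with finite Frobenius orbit. *)
definition closed_rep :: "nat \<Rightarrow> 'k::field vec3 \<Rightarrow> bool" where
  "closed_rep q v \<longleftrightarrow> v \<noteq> (0,0,0) \<and> (\<exists>e>0. proportional v ((frobv q ^^ e) v))"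

(* The closed point determined by v: the Frobenius orbit of geometric points. *)
definition cpt :: "nat \<Rightarrow> 'k::field vec3 \<Rightarrow> 'k vec3 set set" where
  "cpt q v = {ppt ((frobv q ^^ i) v) | i. True}"

definition cdeg :: "nat \<Rightarrow> 'k::field vec3 \<Rightarrow> nat" where
  "cdeg q v = card (cpt q v)"

(* Restriction of f to the affine line t \<mapsto> p + t w, as a polynomial in t. *)
definition line_restr :: "nat \<Rightarrow> (mono3 \<Rightarrow> 'k::field) \<Rightarrow> 'k vec3 \<Rightarrow> 'k vec3 \<Rightarrow> 'k poly" where
  "line_restr d f p w = (\<Sum>m\<in>mons3 d. [:f m:] * [:fst p, fst w:] ^ fst m
      * [:fst (snd p), fst (snd w):] ^ fst (snd m) * [:snd (snd p), snd (snd w):] ^ snd (snd m))"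

definition singular_at :: "nat \<Rightarrow> (mono3 \<Rightarrow> 'k::field) \<Rightarrow> 'k vec3 \<Rightarrow> bool" where
  "singular_at d f p \<longleftrightarrow> (\<forall>w. monom 1 2 dvd line_restr d f p w)"

(* {f=0} tangent to the line {dot3 l x = 0} at the closed point of v: at every geometric point
  of the closed point, the restriction of f to the line vanishes to order \<ge> 2. *)
definition tangent_at :: "nat \<Rightarrow> nat \<Rightarrow> (mono3 \<Rightarrow> 'k::field) \<Rightarrow> 'k vec3 \<Rightarrow> 'k vec3 \<Rightarrow> bool" where
  "tangent_at q d f l v \<longleftrightarrow> (\<forall>i w. dot3 l w = 0 \<and> w \<noteq> (0,0,0)
      \<and> \<not> proportional ((frobv q ^^ i) v) w \<longrightarrow> monom 1 2 dvd line_restr d f ((frobv q ^^ i) v) w)"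

definition mu_d :: "'k::field set \<Rightarrow> nat \<Rightarrow> (nat \<Rightarrow> (mono3 \<Rightarrow> 'k) \<Rightarrow> bool) \<Rightarrow> real" where
  "mu_d F d A = real (card {f \<in> hom_polys F d. A d f}) / real (card (hom_polys F d))"

end

theory Submission
  imports Defs "HOL-Library.FuncSet" "HOL-Library.Function_Algebras" "HOL-Library.Product_Plus"
begin

text \<open>Represent \<open>P\<^sub>i\<close> by \<open>u = a + \<theta> b\<close> in an \<open>F\<close>-rational chart of \<open>L\<^sub>i\<close>, where \<open>\<theta>\<close> has exact
  Frobenius period \<open>e = deg P\<^sub>i\<close>. For \<open>f \<in> R\<^sub>d\<close>, tangency to \<open>L\<^sub>i\<close> at \<open>P\<^sub>i\<close> is the vanishing of the jet
  \<open>(f(u), D\<^sub>b f(u))\<close>, which lies in \<open>F\<^bsub>q^e\<^esub>\<^sup>2\<close>, and singularity at \<open>Q\<^sub>j\<close> is the vanishing of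
  \<open>(f(Q\<^sub>j), D\<^sub>b\<^sub>1 f(Q\<^sub>j), D\<^sub>b\<^sub>2 f(Q\<^sub>j)) \<in> F\<^sup>3\<close>. The joint jet map is additive, so \<open>\<mu>\<^sub>d\<close> is the inverse
  of the size of its image. For large \<open>d\<close> it is onto the whole target of size
  \<open>q\<^bsup>3s + \<Sum> 2 deg P\<^sub>i\<^esup>\<close>: homogenized polynomials of degree \<open>< 2e\<close> realise every jet at \<open>u\<close>, since
  \<open>R \<mapsto> (R(\<theta>), R'(\<theta>))\<close> is injective on them (otherwise the \<open>e\<close> conjugates of \<open>\<theta>\<close> would be double
  roots of a nonzero such \<open>R\<close>), and products of linear forms and of homogenized squared minimal
  polynomials separate the points, so jets can be prescribed at each point independently.\<close>

section \<open>Finite subfields and Frobenius\<close>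

locale finite_subfield =
  fixes F :: "'k::field set" and q :: nat
  assumes subfield: "is_subfield F" and finite_F: "finite F" and card_F: "card F = q"
begin

lemma zero_mem: "0 \<in> F" and one_mem: "1 \<in> F"
  and add_mem: "x \<in> F \<Longrightarrow> y \<in> F \<Longrightarrow> x + y \<in> F"
  and mult_mem: "x \<in> F \<Longrightarrow> y \<in> F \<Longrightarrow> x * y \<in> F"
  and uminus_mem: "x \<in> F \<Longrightarrow> - x \<in> F"
  and inverse_mem: "x \<in> F \<Longrightarrow> inverse x \<in> F"
  using subfield unfolding is_subfield_def by auto

lemma diff_mem: "x \<in> F \<Longrightarrow> y \<in> F \<Longrightarrow> x - y \<in> F"
  by (metis add_mem uminus_mem diff_conv_add_uminus)

lemma divide_mem: "x \<in> F \<Longrightarrow> y \<in> F \<Longrightarrow> x / y \<in> F"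
  by (metis mult_mem inverse_mem divide_inverse)

lemma power_mem: "x \<in> F \<Longrightarrow> x ^ n \<in> F"
  by (induction n) (auto intro: one_mem mult_mem)

lemma of_nat_mem: "of_nat n \<in> F"
  by (induction n) (auto intro: zero_mem one_mem add_mem)

lemma sum_mem: "(\<And>i. i \<in> A \<Longrightarrow> g i \<in> F) \<Longrightarrow> sum g A \<in> F"
  by (induction A rule: infinite_finite_induct) (auto intro: zero_mem add_mem)

lemma card_ge_2: "2 \<le> q"
proof -
  have "card {0, 1::'k} \<le> card F"
    using finite_F zero_mem one_mem by (intro card_mono) auto
  thus ?thesis using card_F by simp
qed

text \<open>Multiplication by a nonzero \<open>c \<in> F\<close> permutes \<open>F - {0}\<close>, so \<open>c ^ (q - 1) = 1\<close>.\<close>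
lemma power_card_eq: assumes c: "c \<in> F" shows "c ^ q = c"
proof (cases "c = 0")
  case True thus ?thesis using card_ge_2 by simp
next
  case False
  let ?U = "F - {0}"
  have perm: "(\<lambda>y. c * y) ` ?U = ?U"
  proof
    show "(\<lambda>y. c * y) ` ?U \<subseteq> ?U" using False c mult_mem by auto
    show "?U \<subseteq> (\<lambda>y. c * y) ` ?U"
    proof
      fix y assume y: "y \<in> ?U"
      hence "y / c \<in> ?U" using c False divide_mem by auto
      moreover have "y = c * (y / c)" using False by simp
      ultimately show "y \<in> (\<lambda>y. c * y) ` ?U" by blast
    qed
  qed
  have inj: "inj_on (\<lambda>y. c * y) ?U" using False by (auto simp: inj_on_def)
  have "prod id ?U = prod (\<lambda>y. c * y) ?U"
    using prod.reindex[OF inj, of id] perm by simp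
  also have "\<dots> = c ^ card ?U * prod id ?U" by (simp add: prod.distrib)
  finally have "c ^ card ?U = 1"
    using finite_F by (simp add: prod_zero_iff)
  moreover have "card ?U = q - 1" using card_F zero_mem finite_F by (simp add: card_Diff_singleton)
  ultimately have "c ^ (q - 1) = 1" by simp
  moreover have "c ^ q = c ^ (q - 1) * c" using card_ge_2 by (metis power_minus_mult zero_less_numeral less_le_trans)
  ultimately show ?thesis by simp
qed

text \<open>The difference of the two sides has degree \<open>< q\<close> but vanishes on all \<open>q\<close> elements of \<open>F\<close>.\<close>
lemma one_plus_X_power_card: "[:1, 1:] ^ q = (monom 1 q + 1 :: 'k poly)"
proof (rule ccontr)
  define h where "h = [:1, 1:] ^ q - (monom 1 q + 1 :: 'k poly)"
  assume "[:1, 1:] ^ q \<noteq> (monom 1 q + 1 :: 'k poly)"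
  hence h0: "h \<noteq> 0" unfolding h_def by simp
  have deg: "degree ([:1, 1::'k:] ^ q) = q" by (rule degree_linear_power)
  hence "coeff ([:1, 1::'k:] ^ q) q = 1" using lead_coeff_power[of "[:1, 1::'k:]" q] by simp
  hence "coeff h q = 0" unfolding h_def using card_ge_2 by (simp add: coeff_monom)
  moreover have "degree h \<le> q" unfolding h_def using deg
    by (intro degree_diff_le) (auto intro: degree_add_le simp: degree_monom_eq)
  ultimately have "degree h < q" using h0 by (metis le_neq_implies_less leading_coeff_0_iff)
  have "F \<subseteq> {x. poly h x = 0}"
  proof
    fix x assume x: "x \<in> F"
    hence "(1 + x) ^ q = 1 + x" "x ^ q = x" using one_mem add_mem power_card_eq by auto
    thus "x \<in> {x. poly h x = 0}" unfolding h_def by (simp add: poly_monom add.commute)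
  qed
  hence "q \<le> card {x. poly h x = 0}"
    using card_F poly_roots_finite[OF h0] card_mono by metis
  also have "\<dots> \<le> degree h" using card_poly_roots_bound[OF h0] .
  finally show False using \<open>degree h < q\<close> by simp
qed

lemma power_card_add: "(x + y) ^ q = x ^ q + (y ^ q :: 'k)"
proof (cases "y = 0")
  case True thus ?thesis using card_ge_2 by simp
next
  case False
  have eq: "(1 + x / y) ^ q = (x / y) ^ q + 1"
    using arg_cong[OF one_plus_X_power_card, of "\<lambda>p. poly p (x / y)"] by (simp add: poly_monom)
  have "x + y = y * (1 + x / y)" using False by (simp add: field_simps)
  hence "(x + y) ^ q = y ^ q * (1 + x / y) ^ q" by (simp add: power_mult_distrib)
  also have "\<dots> = y ^ q * ((x / y) ^ q + 1)" using eq by simp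
  also have "\<dots> = x ^ q + y ^ q" using False by (simp add: power_divide field_simps)
  finally show ?thesis .
qed

lemma frob_add: "(x + y) ^ q ^ i = x ^ q ^ i + (y ^ q ^ i :: 'k)"
  by (induction i arbitrary: x y) (simp_all add: power_mult power_card_add)

lemma frob_zero: "(0::'k) ^ q ^ i = 0"
  using card_ge_2 by simp

lemma frob_diff: "(x - y) ^ q ^ i = x ^ q ^ i - (y ^ q ^ i :: 'k)"
  using frob_add[of "x - y" y i] by (simp add: algebra_simps)

lemma frob_sum: "(sum g A) ^ q ^ i = (\<Sum>a\<in>A. (g a :: 'k) ^ q ^ i)"
  by (induction A rule: infinite_finite_induct) (simp_all add: frob_zero frob_add)

lemma frob_mem: "c \<in> F \<Longrightarrow> c ^ q ^ i = c"
  by (induction i) (simp_all add: power_mult power_card_eq)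

end

section \<open>Homogeneous polynomials restricted to lines\<close>

fun mono_eval :: "mono3 \<Rightarrow> 'k::field vec3 \<Rightarrow> 'k" where
  "mono_eval (a, b, c) (x, y, z) = x ^ a * y ^ b * z ^ c"

fun mono_deriv :: "mono3 \<Rightarrow> 'k::field vec3 \<Rightarrow> 'k vec3 \<Rightarrow> 'k" where
  "mono_deriv (a, b, c) (x, y, z) (u, v, w) = of_nat a * x ^ (a - 1) * u * y ^ b * z ^ c
     + of_nat b * x ^ a * y ^ (b - 1) * v * z ^ c + of_nat c * x ^ a * y ^ b * z ^ (c - 1) * w"

fun mono_line :: "mono3 \<Rightarrow> 'k::field vec3 \<Rightarrow> 'k vec3 \<Rightarrow> 'k poly" where
  "mono_line (a, b, c) (x, y, z) (u, v, w) = [:x, u:] ^ a * [:y, v:] ^ b * [:z, w:] ^ c"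

fun mono_add :: "mono3 \<Rightarrow> mono3 \<Rightarrow> mono3" where
  "mono_add (a, b, c) (a', b', c') = (a + a', b + b', c + c')"

definition heval :: "nat \<Rightarrow> (mono3 \<Rightarrow> 'k::field) \<Rightarrow> 'k vec3 \<Rightarrow> 'k" where
  "heval d f p = (\<Sum>m\<in>mons3 d. f m * mono_eval m p)"

definition hderiv :: "nat \<Rightarrow> (mono3 \<Rightarrow> 'k::field) \<Rightarrow> 'k vec3 \<Rightarrow> 'k vec3 \<Rightarrow> 'k" where
  "hderiv d f p w = (\<Sum>m\<in>mons3 d. f m * mono_deriv m p w)"

definition hmult :: "nat \<Rightarrow> nat \<Rightarrow> (mono3 \<Rightarrow> 'k::field) \<Rightarrow> (mono3 \<Rightarrow> 'k) \<Rightarrow> mono3 \<Rightarrow> 'k" where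
  "hmult d1 d2 f g m =
     (\<Sum>x\<in>{x \<in> mons3 d1 \<times> mons3 d2. mono_add (fst x) (snd x) = m}. f (fst x) * g (snd x))"

definition hlin :: "'k::field vec3 \<Rightarrow> mono3 \<Rightarrow> 'k" where
  "hlin l m = (if m = (1, 0, 0) then fst l else if m = (0, 1, 0) then fst (snd l)
     else if m = (0, 0, 1) then snd (snd l) else 0)"

definition hone :: "mono3 \<Rightarrow> 'k::field" where
  "hone m = (if m = (0, 0, 0) then 1 else 0)"

primrec hlin_pow :: "'k::field vec3 \<Rightarrow> nat \<Rightarrow> mono3 \<Rightarrow> 'k" where
  "hlin_pow l 0 = hone"
| "hlin_pow l (Suc k) = hmult 1 k (hlin l) (hlin_pow l k)"

definition lincomb :: "'k::field \<Rightarrow> 'k vec3 \<Rightarrow> 'k \<Rightarrow> 'k vec3 \<Rightarrow> 'k vec3" where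
  "lincomb \<alpha> x \<beta> y = (\<alpha> * fst x + \<beta> * fst y, \<alpha> * fst (snd x) + \<beta> * fst (snd y),
      \<alpha> * snd (snd x) + \<beta> * snd (snd y))"

lemma finite_mons3: "finite (mons3 d)"
proof -
  have "mons3 d \<subseteq> {..d} \<times> {..d} \<times> {..d}" unfolding mons3_def by auto
  thus ?thesis by (rule finite_subset) auto
qed

lemma mem_mons3 [simp]: "(a, b, c) \<in> mons3 d \<longleftrightarrow> a + b + c = d"
  unfolding mons3_def by simp

lemma mons3_0: "mons3 0 = {(0, 0, 0)}"
  unfolding mons3_def by auto

lemma mons3_1: "mons3 (Suc 0) = {(1, 0, 0), (0, 1, 0), (0, 0, 1)}"
  unfolding mons3_def by auto

lemma line_restr_eq_sum: "line_restr d f p w = (\<Sum>m\<in>mons3 d. smult (f m) (mono_line m p w))"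
  unfolding line_restr_def
  by (rule sum.cong[OF refl]) (cases p; cases w; auto simp: mult.assoc)

lemma coeff_mult_1:
  "coeff (p * q) (Suc 0) = coeff p 0 * coeff q (Suc 0) + coeff p (Suc 0) * coeff q 0"
  by (simp add: coeff_mult atMost_Suc add.commute)

lemma coeff_linear_power_0: "coeff ([:x, u:] ^ n) 0 = x ^ n"
  by (induction n) (auto simp: coeff_mult_0)

lemma coeff_linear_power_1: "coeff ([:x, u:] ^ n) (Suc 0) = of_nat n * x ^ (n - 1) * u"
proof (induction n)
  case (Suc n)
  have "coeff ([:x, u:] ^ Suc n) (Suc 0) = x * coeff ([:x, u:] ^ n) (Suc 0) + u * x ^ n"
    by (simp add: coeff_mult_1 coeff_linear_power_0)
  also have "\<dots> = of_nat (Suc n) * x ^ n * u"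
    using Suc by (cases n) (simp_all add: algebra_simps)
  finally show ?case by simp
qed simp

lemma coeff_mono_line_0: "coeff (mono_line m p w) 0 = mono_eval m p"
  by (cases m; cases p; cases w) (simp add: coeff_mult_0 coeff_linear_power_0)

lemma coeff_mono_line_1: "coeff (mono_line m p w) (Suc 0) = mono_deriv m p w"
  by (cases m; cases p; cases w)
    (simp add: coeff_mult_1 coeff_mult_0 coeff_linear_power_0 coeff_linear_power_1 algebra_simps)

lemma coeff_line_restr_0: "coeff (line_restr d f p w) 0 = heval d f p"
  unfolding line_restr_eq_sum heval_def coeff_sum by (simp add: coeff_mono_line_0)

lemma coeff_line_restr_1: "coeff (line_restr d f p w) (Suc 0) = hderiv d f p w"
  unfolding line_restr_eq_sum hderiv_def coeff_sum by (simp add: coeff_mono_line_1)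

lemma monom_2_dvd_iff:
  "monom 1 2 dvd (g :: 'k::field poly) \<longleftrightarrow> coeff g 0 = 0 \<and> coeff g (Suc 0) = 0"
proof
  assume "monom 1 2 dvd g"
  then obtain r where "g = monom 1 2 * r" by blast
  thus "coeff g 0 = 0 \<and> coeff g (Suc 0) = 0" by (simp add: coeff_monom_mult)
next
  assume h: "coeff g 0 = 0 \<and> coeff g (Suc 0) = 0"
  obtain a g' where g: "g = pCons a g'" by (cases g)
  obtain b r where g': "g' = pCons b r" by (cases g')
  have "a = 0" "b = 0" using h g g' by auto
  hence "g = monom 1 2 * r" using g g' by (simp add: numeral_2_eq_2 monom_Suc monom_0)
  thus "monom 1 2 dvd g" by simp
qed

lemma monom_2_dvd_line_restr_iff:
  "monom 1 2 dvd line_restr d f p w \<longleftrightarrow> heval d f p = 0 \<and> hderiv d f p w = 0"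
  by (simp add: monom_2_dvd_iff coeff_line_restr_0 coeff_line_restr_1)

lemma mono_deriv_self:
  "mono_deriv m p p = of_nat (fst m + fst (snd m) + snd (snd m)) * mono_eval m p"
proof -
  obtain a b c where m: "m = (a, b, c)" by (cases m)
  obtain x y z where p: "p = (x, y, z)" by (cases p)
  have 1: "of_nat a * x ^ (a - 1) * x * y ^ b * z ^ c = of_nat a * (x ^ a * y ^ b * z ^ c)"
    by (cases a) (simp_all add: mult_ac)
  have 2: "of_nat b * x ^ a * y ^ (b - 1) * y * z ^ c = of_nat b * (x ^ a * y ^ b * z ^ c)"
    by (cases b) (simp_all add: mult_ac)
  have 3: "of_nat c * x ^ a * y ^ b * z ^ (c - 1) * z = of_nat c * (x ^ a * y ^ b * z ^ c)"
    by (cases c) (simp_all add: mult_ac)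
  show ?thesis unfolding m p mono_deriv.simps mono_eval.simps 1 2 3 by (simp add: distrib_right)
qed

lemma hderiv_self: "hderiv d f p p = of_nat d * heval d f p"
  unfolding hderiv_def heval_def sum_distrib_left
  by (rule sum.cong[OF refl]) (auto simp: mono_deriv_self mons3_def algebra_simps)

lemma mono_deriv_lincomb:
  "mono_deriv m p (lincomb \<alpha> x \<beta> y) = \<alpha> * mono_deriv m p x + \<beta> * mono_deriv m p y"
  by (cases m; cases p; cases x; cases y) (simp add: lincomb_def algebra_simps)

lemma hderiv_lincomb:
  "hderiv d f p (lincomb \<alpha> x \<beta> y) = \<alpha> * hderiv d f p x + \<beta> * hderiv d f p y"
  unfolding hderiv_def mono_deriv_lincomb sum_distrib_left sum.distrib[symmetric]
  by (rule sum.cong[OF refl]) (simp add: algebra_simps)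

lemma hderiv_zero_dir: "hderiv d f p (0, 0, 0) = 0"
  using hderiv_lincomb[of d f p 0 "(0, 0, 0)" 0 "(0, 0, 0)"] by (simp add: lincomb_def)

lemma mono_eval_scale:
  "mono_eval m (scale3 c p) = c ^ (fst m + fst (snd m) + snd (snd m)) * mono_eval m p"
  by (cases m; cases p) (simp add: scale3_def power_mult_distrib power_add algebra_simps)

lemma mono_deriv_scale:
  "mono_deriv m (scale3 c p) w = c ^ (fst m + fst (snd m) + snd (snd m) - 1) * mono_deriv m p w"
proof -
  obtain a b k where m: "m = (a, b, k)" by (cases m)
  obtain x y z where p: "p = (x, y, z)" by (cases p)
  obtain u v w' where w: "w = (u, v, w')" by (cases w)
  have 1: "of_nat a * (c * x) ^ (a - 1) * u * (c * y) ^ b * (c * z) ^ k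
      = c ^ (a + b + k - 1) * (of_nat a * x ^ (a - 1) * u * y ^ b * z ^ k)"
    by (cases a) (simp_all add: power_mult_distrib power_add mult_ac)
  have 2: "of_nat b * (c * x) ^ a * (c * y) ^ (b - 1) * v * (c * z) ^ k
      = c ^ (a + b + k - 1) * (of_nat b * x ^ a * y ^ (b - 1) * v * z ^ k)"
  proof (cases b)
    case (Suc b')
    hence "a + b + k - 1 = a + b' + k" by simp
    thus ?thesis using Suc by (simp add: power_mult_distrib power_add mult_ac)
  qed simp
  have 3: "of_nat k * (c * x) ^ a * (c * y) ^ b * (c * z) ^ (k - 1) * w'
      = c ^ (a + b + k - 1) * (of_nat k * x ^ a * y ^ b * z ^ (k - 1) * w')"
  proof (cases k)
    case (Suc k')
    hence "a + b + k - 1 = a + b + k'" by simp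
    thus ?thesis using Suc by (simp add: power_mult_distrib power_add mult_ac)
  qed simp
  show ?thesis unfolding m p w scale3_def fst_conv snd_conv mono_deriv.simps 1 2 3
    by (simp add: distrib_left)
qed

lemma heval_scale: "heval d f (scale3 c p) = c ^ d * heval d f p"
  unfolding heval_def sum_distrib_left
  by (rule sum.cong[OF refl]) (auto simp: mono_eval_scale mons3_def algebra_simps)

lemma hderiv_scale: "hderiv d f (scale3 c p) w = c ^ (d - 1) * hderiv d f p w"
  unfolding hderiv_def sum_distrib_left
  by (rule sum.cong[OF refl]) (auto simp: mono_deriv_scale mons3_def algebra_simps)

lemma heval_add: "heval d (\<lambda>m. f m + g m) p = heval d f p + heval d g p"
  unfolding heval_def by (simp add: algebra_simps sum.distrib)

lemma hderiv_add: "hderiv d (\<lambda>m. f m + g m) p w = hderiv d f p w + hderiv d g p w"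
  unfolding hderiv_def by (simp add: algebra_simps sum.distrib)

lemma heval_diff: "heval d (f - g) p = heval d f p - heval d g p"
  unfolding heval_def by (simp add: algebra_simps sum_subtractf)

lemma hderiv_diff: "hderiv d (f - g) p w = hderiv d f p w - hderiv d g p w"
  unfolding hderiv_def by (simp add: algebra_simps sum_subtractf)

lemma heval_cmult: "heval d (\<lambda>m. c * f m) p = c * heval d f p"
  unfolding heval_def by (simp add: algebra_simps sum_distrib_left)

lemma hderiv_cmult: "hderiv d (\<lambda>m. c * f m) p w = c * hderiv d f p w"
  unfolding hderiv_def by (simp add: algebra_simps sum_distrib_left)

lemma heval_sum: "heval d (\<lambda>m. \<Sum>i\<in>I. g i m) p = (\<Sum>i\<in>I. heval d (g i) p)"
  unfolding heval_def sum_distrib_right by (rule sum.swap)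

lemma hderiv_sum: "hderiv d (\<lambda>m. \<Sum>i\<in>I. g i m) p w = (\<Sum>i\<in>I. hderiv d (g i) p w)"
  unfolding hderiv_def sum_distrib_right by (rule sum.swap)

lemma smult_sum_right: "smult c (\<Sum>i\<in>I. g i) = (\<Sum>i\<in>I. smult c (g i))"
  by (induction I rule: infinite_finite_induct) (auto simp: smult_add_right)

lemma line_restr_cmult: "line_restr d (\<lambda>m. c * f m) p w = smult c (line_restr d f p w)"
  unfolding line_restr_eq_sum smult_sum_right by simp

lemma line_restr_sum:
  "line_restr d (\<lambda>m. \<Sum>i\<in>I. g i m) p w = (\<Sum>i\<in>I. line_restr d (g i) p w)"
  unfolding line_restr_eq_sum smult_sum by (rule sum.swap)

lemma mono_line_add: "mono_line (mono_add m1 m2) p w = mono_line m1 p w * mono_line m2 p w"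
  by (cases m1; cases m2; cases p; cases w) (simp add: power_add algebra_simps)

lemma mono_add_mem_mons3:
  "m1 \<in> mons3 d1 \<Longrightarrow> m2 \<in> mons3 d2 \<Longrightarrow> mono_add m1 m2 \<in> mons3 (d1 + d2)"
  by (cases m1; cases m2) simp

lemma line_restr_hmult:
  "line_restr (d1 + d2) (hmult d1 d2 f g) p w = line_restr d1 f p w * line_restr d2 g p w"
proof -
  let ?S = "mons3 d1 \<times> mons3 d2"
  let ?h = "\<lambda>x. smult (f (fst x) * g (snd x)) (mono_line (mono_add (fst x) (snd x)) p w)"
  have "line_restr d1 f p w * line_restr d2 g p w
      = (\<Sum>m1\<in>mons3 d1. \<Sum>m2\<in>mons3 d2. smult (f m1) (mono_line m1 p w) * smult (g m2) (mono_line m2 p w))"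
    unfolding line_restr_eq_sum by (simp add: sum_product)
  also have "\<dots> = (\<Sum>x\<in>?S. ?h x)"
    unfolding sum.cartesian_product
    by (rule sum.cong[OF refl]) (auto simp: mono_line_add mult.commute mult.left_commute)
  also have "\<dots> = (\<Sum>m\<in>mons3 (d1 + d2). \<Sum>x\<in>{x \<in> ?S. mono_add (fst x) (snd x) = m}. ?h x)"
    by (rule sum.group[symmetric]) (auto simp: finite_mons3 intro: mono_add_mem_mons3)
  also have "\<dots> = (\<Sum>m\<in>mons3 (d1 + d2). smult (hmult d1 d2 f g m) (mono_line m p w))"
    unfolding hmult_def smult_sum by (rule sum.cong[OF refl], rule sum.cong[OF refl]) auto
  finally show ?thesis unfolding line_restr_eq_sum by simp
qed

lemma line_restr_hlin: "line_restr (Suc 0) (hlin l) p w = [:dot3 l p, dot3 l w:]"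
  unfolding line_restr_eq_sum mons3_1
  by (cases l; cases p; cases w) (simp add: hlin_def dot3_def algebra_simps)

lemma line_restr_hone: "line_restr 0 hone p w = 1"
  unfolding line_restr_eq_sum mons3_0 by (cases p; cases w) (simp add: hone_def)

lemma line_restr_hlin_pow: "line_restr k (hlin_pow l k) p w = [:dot3 l p, dot3 l w:] ^ k"
proof (induction k)
  case (Suc k)
  thus ?case using line_restr_hmult[of "Suc 0" k "hlin l" "hlin_pow l k" p w]
    by (simp add: line_restr_hlin)
qed (simp add: line_restr_hone)

lemma heval_hmult: "heval (d1 + d2) (hmult d1 d2 f g) p = heval d1 f p * heval d2 g p"
  using arg_cong[OF line_restr_hmult, of "\<lambda>r. coeff r 0"] by (simp add: coeff_line_restr_0 coeff_mult_0)

lemma hderiv_hmult: "hderiv (d1 + d2) (hmult d1 d2 f g) p w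
    = heval d1 f p * hderiv d2 g p w + hderiv d1 f p w * heval d2 g p"
  using arg_cong[OF line_restr_hmult, of "\<lambda>r. coeff r (Suc 0)"]
  by (simp add: coeff_line_restr_0 coeff_line_restr_1 coeff_mult_1)

lemma heval_hlin: "heval (Suc 0) (hlin l) p = dot3 l p"
  using arg_cong[OF line_restr_hlin[of l p p], of "\<lambda>r. coeff r 0"] by (simp add: coeff_line_restr_0)

lemma hderiv_hlin: "hderiv (Suc 0) (hlin l) p w = dot3 l w"
  using arg_cong[OF line_restr_hlin[of l p w], of "\<lambda>r. coeff r (Suc 0)"] by (simp add: coeff_line_restr_1)

lemma heval_hlin_pow: "heval k (hlin_pow l k) p = dot3 l p ^ k"
  using arg_cong[OF line_restr_hlin_pow[of k l p p], of "\<lambda>r. coeff r 0"]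
  by (simp add: coeff_line_restr_0 coeff_linear_power_0)

lemma hderiv_hlin_pow: "hderiv k (hlin_pow l k) p w = of_nat k * dot3 l p ^ (k - 1) * dot3 l w"
  using arg_cong[OF line_restr_hlin_pow[of k l p w], of "\<lambda>r. coeff r (Suc 0)"]
  by (simp add: coeff_line_restr_1 coeff_linear_power_1)

lemma heval_hone: "heval 0 hone p = 1"
  using arg_cong[OF line_restr_hone[of p p], of "\<lambda>r. coeff r 0"] by (simp add: coeff_line_restr_0)

section \<open>Jets, and forms with coefficients in \<open>F\<close>\<close>

type_synonym 'k site = "'k vec3 \<times> 'k vec3 \<times> 'k vec3"

fun jet :: "nat \<Rightarrow> (mono3 \<Rightarrow> 'k::field) \<Rightarrow> 'k site \<Rightarrow> 'k vec3" where
  "jet d f (p, v, w) = (heval d f p, hderiv d f p v, hderiv d f p w)"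

text \<open>If \<open>f\<close> has jet \<open>h\<close> at a site with \<open>fst h \<noteq> 0\<close>, then by the product rule \<open>f * g\<close> has jet \<open>y\<close>
  there iff \<open>g\<close> has jet \<open>jet_quot h y\<close>.\<close>
definition jet_quot :: "'k::field vec3 \<Rightarrow> 'k vec3 \<Rightarrow> 'k vec3" where
  "jet_quot h y = (let x = fst y / fst h in
     (x, (fst (snd y) - fst (snd h) * x) / fst h, (snd (snd y) - snd (snd h) * x) / fst h))"

lemma fst_jet: "fst (jet d f S) = heval d f (fst S)"
  by (cases S) simp

lemma jet_diff: "jet d (f - g) S = jet d f S - jet d g S"
  by (cases S) (simp add: heval_diff hderiv_diff)

lemma jet_zero: "jet d 0 S = 0"
  by (cases S) (simp add: heval_def hderiv_def zero_prod_def)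

lemma jet_sum: "jet d (\<lambda>m. \<Sum>i\<in>I. g i m) S = (\<Sum>i\<in>I. jet d (g i) S)"
  by (cases S) (simp add: heval_sum hderiv_sum sum_prod)

lemma jet_hmult_zero_left: "jet d1 f S = 0 \<Longrightarrow> jet (d1 + d2) (hmult d1 d2 f g) S = 0"
  by (cases S) (simp add: heval_hmult hderiv_hmult zero_prod_def)

lemma jet_hmult_zero_right: "jet d2 g S = 0 \<Longrightarrow> jet (d1 + d2) (hmult d1 d2 f g) S = 0"
  by (cases S) (simp add: heval_hmult hderiv_hmult zero_prod_def)

lemma jet_hmult_quot:
  assumes "fst (jet d1 f S) \<noteq> 0" and "jet d2 g S = jet_quot (jet d1 f S) y"
  shows "jet (d1 + d2) (hmult d1 d2 f g) S = y"
proof -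
  obtain p v w where S: "S = (p, v, w)" by (cases S)
  obtain y0 y1 y2 where y: "y = (y0, y1, y2)" by (cases y)
  define h0 where "h0 = heval d1 f p"
  have h0: "h0 \<noteq> 0" using assms(1) unfolding S h0_def by simp
  have g: "heval d2 g p = y0 / h0" "hderiv d2 g p v = (y1 - hderiv d1 f p v * (y0 / h0)) / h0"
    "hderiv d2 g p w = (y2 - hderiv d1 f p w * (y0 / h0)) / h0"
    using assms(2) unfolding S y h0_def by (simp_all add: jet_quot_def Let_def)
  show ?thesis unfolding S y using h0 g by (simp add: heval_hmult hderiv_hmult h0_def[symmetric])
qed

context finite_subfield
begin

lemma hom_polys_mem: "f \<in> hom_polys F d \<Longrightarrow> f m \<in> F"
  unfolding hom_polys_def by blast

lemma hom_polys_outside: "f \<in> hom_polys F d \<Longrightarrow> m \<notin> mons3 d \<Longrightarrow> f m = 0"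
  unfolding hom_polys_def by blast

lemma zero_mem_hom_polys: "0 \<in> hom_polys F d"
  unfolding hom_polys_def using zero_mem by auto

lemma add_mem_hom_polys:
  "f \<in> hom_polys F d \<Longrightarrow> g \<in> hom_polys F d \<Longrightarrow> (\<lambda>m. f m + g m) \<in> hom_polys F d"
  unfolding hom_polys_def using add_mem by auto

lemma diff_mem_hom_polys: "f \<in> hom_polys F d \<Longrightarrow> g \<in> hom_polys F d \<Longrightarrow> f - g \<in> hom_polys F d"
  unfolding hom_polys_def using diff_mem by auto

lemma cmult_mem_hom_polys: "c \<in> F \<Longrightarrow> f \<in> hom_polys F d \<Longrightarrow> (\<lambda>m. c * f m) \<in> hom_polys F d"
  unfolding hom_polys_def using mult_mem by auto

lemma sum_mem_hom_polys:
  "(\<And>i. i \<in> I \<Longrightarrow> g i \<in> hom_polys F d) \<Longrightarrow> (\<lambda>m. \<Sum>i\<in>I. g i m) \<in> hom_polys F d"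
  unfolding hom_polys_def by (auto intro!: sum_mem sum.neutral)

lemma hmult_outside: "m \<notin> mons3 (d1 + d2) \<Longrightarrow> hmult d1 d2 f g m = 0"
  unfolding hmult_def by (rule sum.neutral) (auto dest: mono_add_mem_mons3)

lemma hmult_mem_hom_polys:
  "f \<in> hom_polys F d1 \<Longrightarrow> g \<in> hom_polys F d2 \<Longrightarrow> hmult d1 d2 f g \<in> hom_polys F (d1 + d2)"
  unfolding hom_polys_def[of F "d1 + d2"] mem_Collect_eq
proof (intro conjI allI impI)
  fix m assume f: "f \<in> hom_polys F d1" and g: "g \<in> hom_polys F d2"
  show "hmult d1 d2 f g m \<in> F" unfolding hmult_def
    by (intro sum_mem mult_mem) (simp_all add: hom_polys_mem[OF f] hom_polys_mem[OF g])
qed (rule hmult_outside)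

lemma hlin_mem_hom_polys: "Fvec F l \<Longrightarrow> hlin l \<in> hom_polys F (Suc 0)"
  unfolding hom_polys_def hlin_def Fvec_def mons3_def using zero_mem by auto

lemma hone_mem_hom_polys: "hone \<in> hom_polys F 0"
  unfolding hom_polys_def hone_def mons3_def using zero_mem one_mem by auto

lemma hlin_pow_mem_hom_polys: "Fvec F l \<Longrightarrow> hlin_pow l k \<in> hom_polys F k"
  by (induction k) (simp_all add: hone_mem_hom_polys hmult_mem_hom_polys[OF hlin_mem_hom_polys, simplified])

lemma finite_hom_polys: "finite (hom_polys F d)"
proof -
  have "inj_on (\<lambda>f. restrict f (mons3 d)) (hom_polys F d)"
    by (rule inj_onI) (metis ext hom_polys_outside restrict_apply')
  moreover have "(\<lambda>f. restrict f (mons3 d)) ` hom_polys F d \<subseteq> PiE (mons3 d) (\<lambda>_. F)"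
    using hom_polys_mem by auto
  moreover have "finite (PiE (mons3 d) (\<lambda>_. F))"
    using finite_mons3 finite_F by (intro finite_PiE) auto
  ultimately show ?thesis using finite_imageD finite_subset by metis
qed

end

lemma frobv_funpow: "(frobv q ^^ i) p = (fst p ^ q ^ i, fst (snd p) ^ q ^ i, snd (snd p) ^ q ^ i)"
  by (induction i) (simp_all add: frobv_def power_mult[symmetric] mult.commute)

context finite_subfield
begin

lemma frobv_Fvec: "Fvec F p \<Longrightarrow> (frobv q ^^ i) p = p"
  unfolding Fvec_def frobv_funpow by (cases p) (simp add: frob_mem)

lemma heval_frob:
  assumes "f \<in> hom_polys F d" shows "heval d f p ^ q ^ i = heval d f ((frobv q ^^ i) p)"
proof -
  have "mono_eval m p ^ q ^ i = mono_eval m ((frobv q ^^ i) p)" for m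
    by (cases m; cases p) (simp add: frobv_funpow power_mult_distrib power_mult[symmetric] mult.commute)
  thus ?thesis unfolding heval_def frob_sum
    using assms by (simp add: power_mult_distrib frob_mem hom_polys_mem)
qed

lemma hderiv_frob:
  assumes "f \<in> hom_polys F d"
  shows "hderiv d f p w ^ q ^ i = hderiv d f ((frobv q ^^ i) p) ((frobv q ^^ i) w)"
proof -
  have "mono_deriv m p w ^ q ^ i = mono_deriv m ((frobv q ^^ i) p) ((frobv q ^^ i) w)" for m
    by (cases m; cases p; cases w) (simp add: frobv_funpow frob_add power_mult_distrib
        frob_mem[OF of_nat_mem] power_mult[symmetric] mult.commute)
  thus ?thesis unfolding hderiv_def frob_sum
    using assms by (simp add: power_mult_distrib frob_mem hom_polys_mem)
qed

lemma jet_mem_F: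
  assumes f: "f \<in> hom_polys F d" and F: "Fvec F p" "Fvec F v" "Fvec F w"
  shows "jet d f (p, v, w) \<in> F \<times> F \<times> F"
proof -
  have ev: "mono_eval m p \<in> F" for m
    using F(1) unfolding Fvec_def by (cases m; cases p) (auto intro!: mult_mem power_mem)
  have dv: "mono_deriv m p x \<in> F" if "Fvec F x" for m x
    using F(1) that unfolding Fvec_def
    by (cases m; cases p; cases x) (auto intro!: add_mem mult_mem power_mem of_nat_mem)
  show ?thesis unfolding jet.simps mem_Times_iff fst_conv snd_conv heval_def hderiv_def
    by (auto intro!: sum_mem mult_mem ev dv F simp: hom_polys_mem[OF f])
qed

end

section \<open>The fields \<open>F\<^bsub>q^e\<^esub>\<close> as values of polynomials\<close>

lemma pcompose_monom_eq_smult_power: "pcompose (monom c i) Q = smult c (Q ^ i)"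
proof -
  have "pcompose ([:0, 1:] ^ i) Q = Q ^ i"
    by (induction i) (simp_all add: pcompose_mult pcompose_pCons pcompose_1)
  thus ?thesis unfolding monom_altdef by (simp add: pcompose_smult)
qed

lemma pcompose_eq_sum: "degree R \<le> D \<Longrightarrow> pcompose R Q = (\<Sum>i\<le>D. smult (coeff R i) (Q ^ i))"
proof -
  assume "degree R \<le> D"
  hence "pcompose R Q = pcompose (\<Sum>i\<le>D. monom (coeff R i) i) Q"
    using poly_as_sum_of_monoms' by metis
  thus ?thesis by (simp add: pcompose_sum pcompose_monom_eq_smult_power)
qed

lemma coeff_pcompose_linear_1: "coeff (pcompose R [:x, 1:]) (Suc 0) = poly (pderiv R) x"
proof (induction R)
  case (pCons a p)
  have "coeff (pcompose (pCons a p) [:x, 1:]) (Suc 0)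
      = x * coeff (pcompose p [:x, 1:]) (Suc 0) + coeff (pcompose p [:x, 1:]) 0"
    by (simp add: pcompose_pCons coeff_mult_1)
  thus ?case using pCons by (simp add: pderiv_pCons algebra_simps)
qed simp

lemma double_root_dvd:
  fixes R :: "'k::field poly"
  assumes "poly R x = 0" "poly (pderiv R) x = 0"
  shows "[:-x, 1:] ^ 2 dvd R"
proof -
  obtain S where S: "R = [:-x, 1:] * S" using assms(1) poly_eq_0_iff_dvd by blast
  have "pderiv R = [:-x, 1:] * pderiv S + S" unfolding S pderiv_mult by (simp add: pderiv_pCons)
  hence "poly S x = 0" using assms(2) by simp
  then obtain S' where "S = [:-x, 1:] * S'" using poly_eq_0_iff_dvd by blast
  hence "R = [:-x, 1:] ^ 2 * S'" unfolding S by (simp only: power2_eq_square mult.assoc)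
  thus ?thesis by simp
qed

lemma sum_order_le_degree_subset:
  fixes R :: "'k::field poly"
  assumes "R \<noteq> 0" "\<forall>x\<in>X. poly R x = 0"
  shows "(\<Sum>x\<in>X. order x R) \<le> degree R"
proof -
  have "(\<Sum>x\<in>X. order x R) \<le> (\<Sum>x | poly R x = 0. order x R)"
    using assms poly_roots_finite by (intro sum_mono2) auto
  also have "\<dots> \<le> degree R" using sum_order_le_degree[OF assms(1)] .
  finally show ?thesis .
qed

context finite_subfield
begin

definition frob_fixed :: "nat \<Rightarrow> 'k set" where
  "frob_fixed e = {x. x ^ q ^ e = x}"

definition frob_period :: "'k \<Rightarrow> nat \<Rightarrow> bool" where
  "frob_period \<theta> e \<longleftrightarrow> 0 < e \<and> \<theta> ^ q ^ e = \<theta> \<and> (\<forall>j. 0 < j \<and> j < e \<longrightarrow> \<theta> ^ q ^ j \<noteq> \<theta>)"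

definition polys_le :: "nat \<Rightarrow> 'k poly set" where
  "polys_le D = {R. (\<forall>k. coeff R k \<in> F) \<and> degree R \<le> D}"

definition value_slope :: "'k \<Rightarrow> 'k poly \<Rightarrow> 'k \<times> 'k" where
  "value_slope \<theta> R = (poly R \<theta>, poly (pderiv R) \<theta>)"

lemma poly_frob: "\<forall>k. coeff R k \<in> F \<Longrightarrow> poly R x ^ q ^ i = poly R (x ^ q ^ i)"
  unfolding poly_altdef frob_sum
  by (simp add: power_mult_distrib frob_mem power_mult[symmetric] mult.commute)

lemma coeff_pderiv_mem: "\<forall>k. coeff R k \<in> F \<Longrightarrow> \<forall>k. coeff (pderiv R) k \<in> F"
  unfolding coeff_pderiv by (blast intro: mult_mem of_nat_mem)

lemma diff_mem_polys_le: "R \<in> polys_le D \<Longrightarrow> S \<in> polys_le D \<Longrightarrow> R - S \<in> polys_le D"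
  unfolding polys_le_def by (auto intro: diff_mem degree_diff_le)

lemma value_slope_diff:
  "value_slope \<theta> (R - S) = (fst (value_slope \<theta> R) - fst (value_slope \<theta> S),
     snd (value_slope \<theta> R) - snd (value_slope \<theta> S))"
  unfolding value_slope_def by (simp add: pderiv_diff)

lemma card_polys_le: "card (polys_le D) = q ^ Suc D"
proof -
  let ?c = "\<lambda>R. restrict (coeff R) {..D}"
  have inj: "inj_on ?c (polys_le D)"
  proof (rule inj_onI)
    fix R S assume "R \<in> polys_le D" "S \<in> polys_le D" "?c R = ?c S"
    show "R = S"
    proof (rule poly_eqI)
      fix k show "coeff R k = coeff S k"
      proof (cases "k \<le> D")
        case True thus ?thesis using fun_cong[OF \<open>?c R = ?c S\<close>, of k] by simp
      next
        case False thus ?thesis using \<open>R \<in> polys_le D\<close> \<open>S \<in> polys_le D\<close>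
          unfolding polys_le_def by (simp add: coeff_eq_0)
      qed
    qed
  qed
  have "?c ` polys_le D = PiE {..D} (\<lambda>_. F)"
  proof
    show "?c ` polys_le D \<subseteq> PiE {..D} (\<lambda>_. F)"
      unfolding polys_le_def by (rule image_subsetI) (simp add: restrict_PiE_iff)
    show "PiE {..D} (\<lambda>_. F) \<subseteq> ?c ` polys_le D"
    proof
      fix g assume g: "g \<in> PiE {..D} (\<lambda>_. F)"
      define R where "R = (\<Sum>i\<le>D. monom (g i) i)"
      have cR: "coeff R k = (if k \<le> D then g k else 0)" for k
        unfolding R_def coeff_sum by (auto simp: coeff_monom)
      have "\<forall>k. coeff R k \<in> F" using g zero_mem by (simp add: cR PiE_iff)
      moreover have "degree R \<le> D" by (intro degree_le) (simp add: cR)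
      ultimately have "R \<in> polys_le D" unfolding polys_le_def by blast
      moreover have "g = ?c R"
      proof
        fix k show "g k = ?c R k" using g by (cases "k \<le> D") (simp_all add: cR PiE_iff extensional_def)
      qed
      ultimately show "g \<in> ?c ` polys_le D" by blast
    qed
  qed
  hence "card (polys_le D) = card (PiE {..D} (\<lambda>_. F))" using card_image[OF inj] by simp
  thus ?thesis by (simp add: card_PiE card_F)
qed

lemma frob_fixed_finite_card:
  assumes "0 < e" shows "finite (frob_fixed e)" "card (frob_fixed e) \<le> q ^ e"
proof -
  define h :: "'k poly" where "h = monom 1 (q ^ e) - [:0, 1:]"
  have "q \<le> q ^ e" using card_ge_2 assms by (intro self_le_power) auto
  hence qe: "2 \<le> q ^ e" using card_ge_2 by simp
  have dh: "degree h = q ^ e" unfolding h_def diff_conv_add_uminus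
    by (subst degree_add_eq_left) (use qe in \<open>auto simp: degree_monom_eq\<close>)
  hence h0: "h \<noteq> 0" using qe by (metis degree_0 not_numeral_le_zero)
  have "frob_fixed e = {x. poly h x = 0}" unfolding frob_fixed_def h_def by (simp add: poly_monom)
  thus "finite (frob_fixed e)" "card (frob_fixed e) \<le> q ^ e"
    using poly_roots_finite[OF h0] card_poly_roots_bound[OF h0] dh by auto
qed

lemma frob_fixed_closed:
  "x \<in> frob_fixed e \<Longrightarrow> y \<in> frob_fixed e \<Longrightarrow> x - y \<in> frob_fixed e"
  "x \<in> frob_fixed e \<Longrightarrow> y \<in> frob_fixed e \<Longrightarrow> x * y \<in> frob_fixed e"
  "x \<in> frob_fixed e \<Longrightarrow> y \<in> frob_fixed e \<Longrightarrow> x / y \<in> frob_fixed e"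
  unfolding frob_fixed_def by (auto simp: frob_diff power_mult_distrib power_divide)

lemma frob_periodic:
  fixes \<theta> :: 'k assumes "\<theta> ^ q ^ e = \<theta>" shows "\<theta> ^ q ^ (e * k + r) = \<theta> ^ q ^ r"
proof (induction k)
  case (Suc k)
  have "q ^ (e * Suc k + r) = q ^ e * q ^ (e * k + r)" by (simp add: power_add[symmetric] add.assoc)
  hence "\<theta> ^ q ^ (e * Suc k + r) = \<theta> ^ (q ^ e * q ^ (e * k + r))" by simp
  also have "\<dots> = (\<theta> ^ q ^ e) ^ q ^ (e * k + r)" by (rule power_mult)
  finally show ?case using Suc assms by simp
qed simp

lemma frob_mod_period: "(\<theta>::'k) ^ q ^ e = \<theta> \<Longrightarrow> \<theta> ^ q ^ i = \<theta> ^ q ^ (i mod e)"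
  using frob_periodic[of \<theta> e "i div e" "i mod e"] by simp

lemma inj_on_conjugates:
  assumes per: "frob_period \<theta> e" shows "inj_on (\<lambda>i. \<theta> ^ q ^ i) {..<e}"
proof -
  have per_e: "\<theta> ^ q ^ e = \<theta>" and mn: "\<forall>j. 0 < j \<and> j < e \<longrightarrow> \<theta> ^ q ^ j \<noteq> \<theta>"
    using per unfolding frob_period_def by auto
  have *: "False" if ij: "i < j" "j < e" and eq: "\<theta> ^ q ^ i = \<theta> ^ q ^ j" for i j
  proof -
    have "(\<theta> ^ q ^ i) ^ q ^ (e - j) = (\<theta> ^ q ^ j) ^ q ^ (e - j)" using eq by simp
    hence "\<theta> ^ q ^ (i + (e - j)) = \<theta> ^ q ^ (j + (e - j))"
      by (simp add: power_mult[symmetric] power_add)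
    also have "j + (e - j) = e" using ij by simp
    finally have "\<theta> ^ q ^ (i + (e - j)) = \<theta>" using per_e by simp
    moreover have "0 < i + (e - j)" "i + (e - j) < e" using ij by auto
    ultimately show False using mn by blast
  qed
  show ?thesis
  proof (rule inj_onI)
    fix i j assume "i \<in> {..<e}" "j \<in> {..<e}" "\<theta> ^ q ^ i = \<theta> ^ q ^ j"
    thus "i = j" using * by (metis lessThan_iff linorder_neqE_nat)
  qed
qed

lemma value_slope_mem_frob_fixed:
  assumes "\<theta> ^ q ^ e = \<theta>" "R \<in> polys_le D"
  shows "value_slope \<theta> R \<in> frob_fixed e \<times> frob_fixed e"
proof -
  have cR: "\<forall>k. coeff R k \<in> F" using assms(2) unfolding polys_le_def by blast
  show ?thesis unfolding value_slope_def frob_fixed_def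
    using poly_frob[OF cR] poly_frob[OF coeff_pderiv_mem[OF cR]] assms(1) by simp
qed

lemma double_roots_at_conjugates:
  assumes cR: "\<forall>k. coeff R k \<in> F" and z: "value_slope \<theta> R = (0, 0)"
  shows "poly R (\<theta> ^ q ^ i) = 0" and "[:- (\<theta> ^ q ^ i), 1:] ^ 2 dvd R"
proof -
  have "poly R (\<theta> ^ q ^ i) = poly R \<theta> ^ q ^ i" "poly (pderiv R) (\<theta> ^ q ^ i) = poly (pderiv R) \<theta> ^ q ^ i"
    using poly_frob[OF cR] poly_frob[OF coeff_pderiv_mem[OF cR]] by simp_all
  thus "poly R (\<theta> ^ q ^ i) = 0" "[:- (\<theta> ^ q ^ i), 1:] ^ 2 dvd R"
    using z unfolding value_slope_def by (simp_all add: frob_zero double_root_dvd)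
qed

lemma card_conjugates: "frob_period \<theta> e \<Longrightarrow> card ((\<lambda>i. \<theta> ^ q ^ i) ` {..<e}) = e"
  using card_image[OF inj_on_conjugates] by simp

text \<open>The \<open>e\<close> conjugates of \<open>\<theta>\<close> are double roots.\<close>
lemma degree_ge_if_value_slope_zero:
  assumes per: "frob_period \<theta> e" and cR: "\<forall>k. coeff R k \<in> F"
    and z: "value_slope \<theta> R = (0, 0)" and R0: "R \<noteq> 0"
  shows "2 * e \<le> degree R"
proof -
  let ?C = "(\<lambda>i. \<theta> ^ q ^ i) ` {..<e}"
  have "\<forall>x\<in>?C. 2 \<le> order x R"
    using double_roots_at_conjugates(2)[OF cR z] R0 by (auto simp: order_divides)
  hence "(\<Sum>x\<in>?C. 2) \<le> (\<Sum>x\<in>?C. order x R)" by (intro sum_mono) auto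
  also have "\<dots> \<le> degree R"
    using R0 double_roots_at_conjugates(1)[OF cR z] by (intro sum_order_le_degree_subset) auto
  finally show ?thesis using card_conjugates[OF per] by (simp add: mult.commute)
qed

lemma inj_on_value_slope:
  assumes per: "frob_period \<theta> e" shows "inj_on (value_slope \<theta>) (polys_le (2 * e - 1))"
proof (rule inj_onI, rule ccontr)
  fix R S assume R: "R \<in> polys_le (2 * e - 1)" and S: "S \<in> polys_le (2 * e - 1)"
    and eq: "value_slope \<theta> R = value_slope \<theta> S" and ne: "R \<noteq> S"
  have D: "R - S \<in> polys_le (2 * e - 1)" using diff_mem_polys_le[OF R S] .
  have "2 * e \<le> degree (R - S)"
    using degree_ge_if_value_slope_zero[OF per, of "R - S"] D eq ne
    unfolding polys_le_def by (simp add: value_slope_diff)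
  thus False using D per unfolding polys_le_def frob_period_def by auto
qed

text \<open>Counting: \<open>q ^ (2 * e)\<close> polynomials inject into a set of size at most \<open>(q ^ e)\<^sup>2\<close>; so no
  algebraic closedness is needed to get \<open>card (frob_fixed e) = q ^ e\<close>.\<close>
lemma card_frob_fixed_and_value_slope_image:
  assumes per: "frob_period \<theta> e"
  shows "card (frob_fixed e) = q ^ e"
    and "value_slope \<theta> ` polys_le (2 * e - 1) = frob_fixed e \<times> frob_fixed e"
proof -
  have e: "0 < e" "\<theta> ^ q ^ e = \<theta>" using per unfolding frob_period_def by auto
  let ?E = "frob_fixed e" and ?V = "value_slope \<theta> ` polys_le (2 * e - 1)"
  have fE: "finite (?E \<times> ?E)" and cE: "card ?E \<le> q ^ e" using frob_fixed_finite_card[OF e(1)] by auto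
  have sub: "?V \<subseteq> ?E \<times> ?E" using value_slope_mem_frob_fixed[OF e(2)] by blast
  have cV: "card ?V = q ^ (2 * e)"
    using card_image[OF inj_on_value_slope[OF per]] card_polys_le[of "2 * e - 1"] e(1) by simp
  have cEE: "card (?E \<times> ?E) = card ?E ^ 2" by (simp add: card_cartesian_product power2_eq_square)
  also have "\<dots> \<le> (q ^ e) ^ 2" using cE by (simp add: power_mono)
  also have "\<dots> = q ^ (2 * e)" by (simp add: power_mult[symmetric] mult.commute)
  finally have "card (?E \<times> ?E) \<le> card ?V" using cV by simp
  hence "card ?V = card (?E \<times> ?E)" using card_mono[OF fE sub] by simp
  thus "?V = ?E \<times> ?E" using card_subset_eq[OF fE sub] by simp
  hence "card ?E ^ 2 = (q ^ e) ^ 2" using cV cEE by (simp add: power_mult[symmetric] mult.commute)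
  thus "card ?E = q ^ e" using power_eq_iff_eq_base[of 2 "card ?E" "q ^ e"] by simp
qed

text \<open>The minimal polynomial of \<open>\<theta>\<close>, squared: its roots are exactly the conjugates of \<open>\<theta>\<close>.\<close>
lemma value_slope_kernel_poly:
  assumes per: "frob_period \<theta> e"
  obtains R where "R \<in> polys_le (2 * e)" "degree R = 2 * e" "value_slope \<theta> R = (0, 0)"
    "\<And>\<phi>. poly R \<phi> = 0 \<Longrightarrow> \<exists>i<e. \<phi> = \<theta> ^ q ^ i"
proof -
  have e: "0 < e" "\<theta> ^ q ^ e = \<theta>" using per unfolding frob_period_def by auto
  have "\<not> inj_on (value_slope \<theta>) (polys_le (2 * e))"
  proof
    assume inj: "inj_on (value_slope \<theta>) (polys_le (2 * e))"
    have "q ^ Suc (2 * e) = card (value_slope \<theta> ` polys_le (2 * e))"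
      using card_image[OF inj] card_polys_le by simp
    also have "\<dots> \<le> card (frob_fixed e \<times> frob_fixed e)"
    proof (rule card_mono)
      show "finite (frob_fixed e \<times> frob_fixed e)" using frob_fixed_finite_card[OF e(1)] by simp
      show "value_slope \<theta> ` polys_le (2 * e) \<subseteq> frob_fixed e \<times> frob_fixed e"
        using value_slope_mem_frob_fixed[OF e(2)] by blast
    qed
    also have "\<dots> = q ^ (2 * e)"
      using card_frob_fixed_and_value_slope_image(1)[OF per]
      by (simp add: card_cartesian_product mult_2 power_add)
    finally show False using card_ge_2 by simp
  qed
  then obtain S1 S2 where S: "S1 \<in> polys_le (2 * e)" "S2 \<in> polys_le (2 * e)" "S1 \<noteq> S2"
    "value_slope \<theta> S1 = value_slope \<theta> S2" unfolding inj_on_def by blast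
  define R where "R = S1 - S2"
  have RD: "R \<in> polys_le (2 * e)" unfolding R_def using diff_mem_polys_le S by blast
  hence cR: "\<forall>k. coeff R k \<in> F" unfolding polys_le_def by blast
  have R0: "R \<noteq> 0" and z: "value_slope \<theta> R = (0, 0)"
    unfolding R_def using S by (simp_all add: value_slope_diff)
  have deg: "degree R = 2 * e"
    using degree_ge_if_value_slope_zero[OF per cR z R0] RD unfolding polys_le_def by simp
  have "\<exists>i<e. \<phi> = \<theta> ^ q ^ i" if root: "poly R \<phi> = 0" for \<phi>
  proof (rule ccontr)
    let ?C = "(\<lambda>i. \<theta> ^ q ^ i) ` {..<e}"
    assume "\<not> (\<exists>i<e. \<phi> = \<theta> ^ q ^ i)"
    hence \<phi>: "\<phi> \<notin> ?C" by auto
    have C2: "\<forall>x\<in>?C. 2 \<le> order x R"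
      using double_roots_at_conjugates(2)[OF cR z] R0 by (auto simp: order_divides)
    have "1 + 2 * e \<le> order \<phi> R + (\<Sum>x\<in>?C. order x R)"
    proof (rule add_mono)
      show "1 \<le> order \<phi> R" using root R0 by (simp add: order_gt_0_iff Suc_le_eq)
      have "(\<Sum>x\<in>?C. 2) \<le> (\<Sum>x\<in>?C. order x R)" using C2 by (intro sum_mono) auto
      thus "2 * e \<le> (\<Sum>x\<in>?C. order x R)" using card_conjugates[OF per] by (simp add: mult.commute)
    qed
    also have "\<dots> = (\<Sum>x\<in>insert \<phi> ?C. order x R)" using \<phi> by simp
    also have "\<dots> \<le> degree R"
      using R0 root double_roots_at_conjugates(1)[OF cR z] by (intro sum_order_le_degree_subset) auto
    finally show False using deg by simp
  qed
  thus ?thesis using that RD deg z by blast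
qed

end

section \<open>Points, lines and Frobenius orbits\<close>

lemma dot3_lincomb: "dot3 l (lincomb \<alpha> x \<beta> y) = \<alpha> * dot3 l x + \<beta> * dot3 l y"
  unfolding dot3_def lincomb_def by (simp add: algebra_simps)

lemma dot3_scale3: "dot3 l (scale3 c x) = c * dot3 l x"
  unfolding dot3_def scale3_def by (simp add: algebra_simps)

lemma lincomb_commute: "lincomb \<alpha> x \<beta> y = lincomb \<beta> y \<alpha> x"
  unfolding lincomb_def by (simp add: add.commute)

lemma lincomb_eq_scale3: "\<alpha> \<noteq> 0 \<Longrightarrow> lincomb \<alpha> a \<beta> b = scale3 \<alpha> (lincomb 1 a (\<beta> / \<alpha>) b)"
  unfolding lincomb_def scale3_def by (simp add: algebra_simps)

lemma lincomb_zero_left: "lincomb 0 a \<beta> b = scale3 \<beta> b"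
  unfolding lincomb_def scale3_def by simp

lemma scale3_scale3: "scale3 c (scale3 c' x) = scale3 (c * c') x"
  unfolding scale3_def by (simp add: mult.assoc)

lemma scale3_one: "scale3 1 x = x"
  unfolding scale3_def by simp

lemma proportional_sym: "proportional u v \<Longrightarrow> proportional v u"
proof -
  assume "proportional u v"
  then obtain c where c: "c \<noteq> 0" "v = scale3 c u" unfolding proportional_def by blast
  hence "u = scale3 (1 / c) v" by (simp add: scale3_scale3 scale3_one)
  thus ?thesis using c(1) unfolding proportional_def by (intro exI[of _ "1 / c"]) simp
qed

lemma proportional_trans: "proportional u v \<Longrightarrow> proportional v w \<Longrightarrow> proportional u w"
  unfolding proportional_def by (metis mult_eq_0_iff scale3_scale3)

lemma ppt_scale3: assumes c: "c \<noteq> 0" shows "ppt (scale3 c x) = ppt x"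
  unfolding ppt_def
proof (intro equalityI subsetI)
  fix y assume "y \<in> {scale3 c' (scale3 c x) |c'. c' \<noteq> 0}"
  then obtain c' where "c' \<noteq> 0" "y = scale3 (c' * c) x" by (auto simp: scale3_scale3)
  thus "y \<in> {scale3 c x |c. c \<noteq> 0}" using c by auto
next
  fix y assume "y \<in> {scale3 c x |c. c \<noteq> 0}"
  then obtain c' where c': "c' \<noteq> 0" "y = scale3 c' x" by auto
  hence "y = scale3 (c' / c) (scale3 c x)" using c by (simp add: scale3_scale3)
  thus "y \<in> {scale3 c' (scale3 c x) |c'. c' \<noteq> 0}" using c c' by auto
qed

lemma proportional_of_ppt_eq: "ppt x = ppt y \<Longrightarrow> proportional y x"
proof -
  assume "ppt x = ppt y"
  moreover have "x \<in> ppt x" unfolding ppt_def by (intro CollectI exI[of _ 1]) (simp add: scale3_one)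
  ultimately show ?thesis unfolding ppt_def proportional_def by auto
qed

lemma frobv_scale3: "(frobv q ^^ i) (scale3 c p) = scale3 (c ^ q ^ i) ((frobv q ^^ i) p)"
  unfolding frobv_funpow scale3_def by (simp add: power_mult_distrib)

lemma cpt_proportional: assumes "proportional v w" shows "cpt q v = cpt q w"
proof -
  obtain c where c: "c \<noteq> 0" "w = scale3 c v" using assms unfolding proportional_def by blast
  have "ppt ((frobv q ^^ i) w) = ppt ((frobv q ^^ i) v)" for i
    unfolding c(2) frobv_scale3 using c(1) by (simp add: ppt_scale3)
  thus ?thesis unfolding cpt_def by simp
qed

lemma cpt_frobv:
  assumes fixed: "(frobv q ^^ e) u = u" and e: "0 < e" shows "cpt q ((frobv q ^^ j) u) = cpt q u"
proof -
  have per: "(frobv q ^^ (e * k + r)) u = (frobv q ^^ r) u" for k r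
  proof (induction k)
    case (Suc k)
    have "e * Suc k + r = (e * k + r) + e" by simp
    hence "(frobv q ^^ (e * Suc k + r)) u = (frobv q ^^ (e * k + r)) ((frobv q ^^ e) u)"
      by (simp only: funpow_add comp_apply)
    thus ?case using Suc fixed by simp
  qed simp
  have "ppt ((frobv q ^^ i) u) \<in> cpt q ((frobv q ^^ j) u)" for i
  proof -
    have "(frobv q ^^ (i + (e - 1) * j)) ((frobv q ^^ j) u) = (frobv q ^^ (i + (e - 1) * j + j)) u"
      by (simp only: funpow_add comp_apply)
    also have "i + (e - 1) * j + j = e * j + i" using e by (cases e) (simp_all add: algebra_simps)
    finally have "ppt ((frobv q ^^ i) u) = ppt ((frobv q ^^ (i + (e - 1) * j)) ((frobv q ^^ j) u))"
      unfolding per by simp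
    thus ?thesis unfolding cpt_def by blast
  qed
  moreover have "ppt ((frobv q ^^ i) ((frobv q ^^ j) u)) \<in> cpt q u" for i
  proof -
    have "(frobv q ^^ i) ((frobv q ^^ j) u) = (frobv q ^^ (i + j)) u" by (simp add: funpow_add)
    thus ?thesis unfolding cpt_def by auto
  qed
  ultimately show ?thesis unfolding cpt_def by blast
qed

context finite_subfield
begin

lemma frobv_lincomb:
  "Fvec F a \<Longrightarrow> Fvec F b \<Longrightarrow> (frobv q ^^ i) (lincomb \<alpha> a \<beta> b) = lincomb (\<alpha> ^ q ^ i) a (\<beta> ^ q ^ i) b"
  unfolding frobv_funpow lincomb_def Fvec_def by (simp add: frob_add power_mult_distrib frob_mem)

definition line_chart :: "'k vec3 \<Rightarrow> 'k vec3 \<Rightarrow> 'k vec3 \<Rightarrow> 'k vec3 \<Rightarrow> 'k vec3 \<Rightarrow> bool" where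
  "line_chart l a b la lb \<longleftrightarrow> Fvec F a \<and> Fvec F b \<and> Fvec F la \<and> Fvec F lb
     \<and> dot3 l a = 0 \<and> dot3 l b = 0 \<and> dot3 la a = 1 \<and> dot3 la b = 0 \<and> dot3 lb a = 0 \<and> dot3 lb b = 1
     \<and> (\<forall>w. dot3 l w = 0 \<longrightarrow> w = lincomb (dot3 la w) a (dot3 lb w) b)"

lemma line_chart_swap: "line_chart l a b la lb \<Longrightarrow> line_chart l b a lb la"
  unfolding line_chart_def using lincomb_commute by metis

lemma line_chart_exists:
  assumes "Fvec F l" "l \<noteq> (0, 0, 0)" shows "\<exists>a b la lb. line_chart l a b la lb"
proof -
  obtain l1 l2 l3 where l: "l = (l1, l2, l3)" by (cases l)
  have F: "l1 \<in> F" "l2 \<in> F" "l3 \<in> F" using assms(1) l unfolding Fvec_def by auto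
  consider "l3 \<noteq> 0" | "l3 = 0" "l2 \<noteq> 0" | "l3 = 0" "l2 = 0" "l1 \<noteq> 0" using assms(2) l by auto
  thus ?thesis
  proof cases
    case 1
    have "line_chart l (l3, 0, - l1) (0, l3, - l2) (1 / l3, 0, 0) (0, 1 / l3, 0)"
      unfolding line_chart_def Fvec_def l using 1 F
      by (auto simp: dot3_def lincomb_def zero_mem uminus_mem divide_mem one_mem field_simps; algebra)
    thus ?thesis by blast
  next
    case 2
    have "line_chart l (l2, - l1, 0) (0, - l3, l2) (1 / l2, 0, 0) (0, 0, 1 / l2)"
      unfolding line_chart_def Fvec_def l using 2 F
      by (auto simp: dot3_def lincomb_def zero_mem uminus_mem divide_mem one_mem field_simps; algebra)
    thus ?thesis by blast
  next
    case 3
    have "line_chart l (- l2, l1, 0) (- l3, 0, l1) (0, 1 / l1, 0) (0, 0, 1 / l1)"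
      unfolding line_chart_def Fvec_def l using 3 F
      by (auto simp: dot3_def lincomb_def zero_mem uminus_mem divide_mem one_mem field_simps; algebra)
    thus ?thesis by blast
  qed
qed

lemma line_chart_coord:
  assumes "line_chart l a b la lb" "lincomb 1 a x b = scale3 c (lincomb 1 a y b)"
  shows "c = 1" "x = y"
proof -
  have "dot3 la (lincomb 1 a x b) = dot3 la (scale3 c (lincomb 1 a y b))"
    "dot3 lb (lincomb 1 a x b) = dot3 lb (scale3 c (lincomb 1 a y b))"
    using assms(2) by simp_all
  thus "c = 1" "x = y" using assms(1) unfolding line_chart_def by (simp_all add: dot3_lincomb dot3_scale3)
qed

lemma line_chart_point_nonzero: "line_chart l a b la lb \<Longrightarrow> lincomb 1 a \<theta> b \<noteq> (0, 0, 0)"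
proof
  assume ch: "line_chart l a b la lb" and u0: "lincomb 1 a \<theta> b = (0, 0, 0)"
  have "dot3 la (lincomb 1 a \<theta> b) = 1" using ch unfolding line_chart_def by (simp add: dot3_lincomb)
  thus False unfolding u0 by (simp add: dot3_def)
qed

definition point_frame :: "'k vec3 \<Rightarrow> 'k vec3 \<Rightarrow> 'k vec3 \<Rightarrow> 'k vec3 \<Rightarrow> 'k vec3 \<Rightarrow> 'k vec3 \<Rightarrow> bool" where
  "point_frame Q b1 b2 m0 m1 m2 \<longleftrightarrow> Fvec F Q \<and> Fvec F b1 \<and> Fvec F b2 \<and> Fvec F m0 \<and> Fvec F m1 \<and> Fvec F m2
    \<and> dot3 m0 Q = 1 \<and> dot3 m0 b1 = 0 \<and> dot3 m0 b2 = 0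
    \<and> dot3 m1 Q = 0 \<and> dot3 m1 b1 = 1 \<and> dot3 m1 b2 = 0
    \<and> dot3 m2 Q = 0 \<and> dot3 m2 b1 = 0 \<and> dot3 m2 b2 = 1
    \<and> (\<forall>w. w = lincomb (dot3 m0 w) Q 1 (lincomb (dot3 m1 w) b1 (dot3 m2 w) b2))"

lemma point_frame_exists:
  assumes "Fvec F Q" "Q \<noteq> (0, 0, 0)" shows "\<exists>b1 b2 m0 m1 m2. point_frame Q b1 b2 m0 m1 m2"
proof -
  obtain x y z where Q: "Q = (x, y, z)" by (cases Q)
  have F: "x \<in> F" "y \<in> F" "z \<in> F" using assms(1) Q unfolding Fvec_def by auto
  consider "x \<noteq> 0" | "x = 0" "y \<noteq> 0" | "x = 0" "y = 0" "z \<noteq> 0" using assms(2) Q by auto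
  thus ?thesis
  proof cases
    case 1
    have "point_frame Q (0, 1, 0) (0, 0, 1) (1 / x, 0, 0) (- y / x, 1, 0) (- z / x, 0, 1)"
      unfolding point_frame_def Fvec_def Q using 1 F
      by (auto simp: dot3_def lincomb_def zero_mem uminus_mem divide_mem one_mem field_simps)
    thus ?thesis by blast
  next
    case 2
    have "point_frame Q (1, 0, 0) (0, 0, 1) (0, 1 / y, 0) (1, - x / y, 0) (0, - z / y, 1)"
      unfolding point_frame_def Fvec_def Q using 2 F
      by (auto simp: dot3_def lincomb_def zero_mem uminus_mem divide_mem one_mem field_simps)
    thus ?thesis by blast
  next
    case 3
    have "point_frame Q (1, 0, 0) (0, 1, 0) (0, 0, 1 / z) (1, 0, - x / z) (0, 1, - y / z)"
      unfolding point_frame_def Fvec_def Q using 3 F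
      by (auto simp: dot3_def lincomb_def zero_mem uminus_mem divide_mem one_mem field_simps)
    thus ?thesis by blast
  qed
qed

lemma singular_at_iff_jet:
  assumes "point_frame Q b1 b2 m0 m1 m2"
  shows "singular_at d f Q \<longleftrightarrow> jet d f (Q, b1, b2) = (0, 0, 0)"
proof
  assume "singular_at d f Q"
  hence z: "\<forall>w. heval d f Q = 0 \<and> hderiv d f Q w = 0"
    unfolding singular_at_def monom_2_dvd_line_restr_iff by blast
  show "jet d f (Q, b1, b2) = (0, 0, 0)" using spec[OF z, of b1] spec[OF z, of b2] by simp
next
  assume "jet d f (Q, b1, b2) = (0, 0, 0)"
  hence h: "heval d f Q = 0" "hderiv d f Q b1 = 0" "hderiv d f Q b2 = 0" by simp_all
  have "hderiv d f Q w = 0" for w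
  proof -
    have "w = lincomb (dot3 m0 w) Q 1 (lincomb (dot3 m1 w) b1 (dot3 m2 w) b2)"
      using assms unfolding point_frame_def by blast
    hence "hderiv d f Q w = dot3 m0 w * hderiv d f Q Q + (dot3 m1 w * hderiv d f Q b1 + dot3 m2 w * hderiv d f Q b2)"
      by (metis hderiv_lincomb mult_1)
    thus ?thesis using h by (simp add: hderiv_self)
  qed
  thus "singular_at d f Q" unfolding singular_at_def monom_2_dvd_line_restr_iff using h by blast
qed

text \<open>Tangency at all conjugates follows from tangency at one of them by applying Frobenius;
  along the line, only the direction \<open>b\<close> matters by Euler's identity.\<close>
lemma tangent_at_iff_jet:
  assumes ch: "line_chart l a b la lb" and pr: "proportional v (lincomb 1 a \<theta> b)"
    and f: "f \<in> hom_polys F d"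
  shows "tangent_at q d f l v \<longleftrightarrow> jet d f (lincomb 1 a \<theta> b, b, (0, 0, 0)) = (0, 0, 0)"
proof -
  let ?u = "lincomb 1 a \<theta> b"
  obtain c where c: "c \<noteq> 0" "?u = scale3 c v" using pr unfolding proportional_def by blast
  have aF: "Fvec F a" and bF: "Fvec F b" and lb: "dot3 l b = 0" using ch unfolding line_chart_def by auto
  have "tangent_at q d f l v \<longleftrightarrow> heval d f ?u = 0 \<and> hderiv d f ?u b = 0"
  proof
    assume t: "tangent_at q d f l v"
    have "dot3 lb b = 1" using ch unfolding line_chart_def by blast
    hence b0: "b \<noteq> (0, 0, 0)" by (auto simp: dot3_def)
    have "\<not> proportional v b"
    proof
      assume "proportional v b"
      hence "proportional ?u b" using proportional_trans proportional_sym pr by blast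
      then obtain c' where c': "c' \<noteq> 0" "b = scale3 c' ?u" unfolding proportional_def by blast
      have "dot3 la b = dot3 la (scale3 c' ?u)" using c'(2) by (rule arg_cong)
      hence "dot3 la b = c' * dot3 la ?u" by (simp only: dot3_scale3)
      thus False using ch c'(1) unfolding line_chart_def by (simp add: dot3_lincomb)
    qed
    moreover have "dot3 l b = 0 \<and> b \<noteq> (0, 0, 0) \<and> \<not> proportional ((frobv q ^^ 0) v) b
        \<longrightarrow> monom 1 2 dvd line_restr d f ((frobv q ^^ 0) v) b"
      using t unfolding tangent_at_def by blast
    ultimately have "monom 1 2 dvd line_restr d f v b" using lb b0 by simp
    thus "heval d f ?u = 0 \<and> hderiv d f ?u b = 0"
      using c by (simp add: monom_2_dvd_line_restr_iff heval_scale hderiv_scale)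
  next
    assume h: "heval d f ?u = 0 \<and> hderiv d f ?u b = 0"
    show "tangent_at q d f l v" unfolding tangent_at_def
    proof (intro allI impI)
      fix i w assume w: "dot3 l w = 0 \<and> w \<noteq> (0, 0, 0) \<and> \<not> proportional ((frobv q ^^ i) v) w"
      let ?ui = "lincomb 1 a (\<theta> ^ q ^ i) b"
      have ui: "(frobv q ^^ i) ?u = ?ui" using frobv_lincomb[OF aF bF] by simp
      have ev0: "heval d f ?ui = 0" and ddb: "hderiv d f ?ui b = 0"
        using heval_frob[OF f, of ?u i] hderiv_frob[OF f, of ?u b i] h ui frobv_Fvec[OF bF]
        by (simp_all add: frob_zero)
      have "hderiv d f ?ui ?ui = 1 * hderiv d f ?ui a + \<theta> ^ q ^ i * hderiv d f ?ui b"
        by (rule hderiv_lincomb)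
      hence dda: "hderiv d f ?ui a = 0" using ev0 ddb by (simp add: hderiv_self)
      have "w = lincomb (dot3 la w) a (dot3 lb w) b" using ch w unfolding line_chart_def by blast
      hence ddw: "hderiv d f ?ui w = 0" using dda ddb by (metis hderiv_lincomb mult_zero_right add_0)
      have "?ui = scale3 (c ^ q ^ i) ((frobv q ^^ i) v)" using ui c(2) by (simp add: frobv_scale3)
      hence vi: "(frobv q ^^ i) v = scale3 (1 / c ^ q ^ i) ?ui" using c(1) by (simp add: scale3_scale3 scale3_one)
      show "monom 1 2 dvd line_restr d f ((frobv q ^^ i) v) w"
        unfolding monom_2_dvd_line_restr_iff vi heval_scale hderiv_scale using ev0 ddw by simp
    qed
  qed
  thus ?thesis by (simp add: hderiv_zero_dir)
qed

end

section \<open>Closed points on a line\<close>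

context finite_subfield
begin

lemma line_chart_through_point:
  assumes l: "Fvec F l" "l \<noteq> (0, 0, 0)" and v: "v \<noteq> (0, 0, 0)" "dot3 l v = 0"
  shows "\<exists>a b la lb \<theta>. line_chart l a b la lb \<and> proportional v (lincomb 1 a \<theta> b)"
proof -
  obtain a0 b0 la0 lb0 where ch0: "line_chart l a0 b0 la0 lb0" using line_chart_exists[OF l] by blast
  have "\<exists>a b la lb. line_chart l a b la lb \<and> dot3 la v \<noteq> 0"
  proof (cases "dot3 la0 v = 0")
    case True
    have "v = lincomb (dot3 la0 v) a0 (dot3 lb0 v) b0" using ch0 v(2) unfolding line_chart_def by blast
    hence "v = scale3 (dot3 lb0 v) b0" using True by (simp add: lincomb_zero_left)
    hence "dot3 lb0 v \<noteq> 0" using v(1) by (auto simp: scale3_def)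
    thus ?thesis using line_chart_swap[OF ch0] by blast
  qed (use ch0 in blast)
  then obtain a b la lb where ch: "line_chart l a b la lb" and \<alpha>: "dot3 la v \<noteq> 0" by blast
  have "v = lincomb (dot3 la v) a (dot3 lb v) b" using ch v(2) unfolding line_chart_def by blast
  hence "v = scale3 (dot3 la v) (lincomb 1 a (dot3 lb v / dot3 la v) b)" using lincomb_eq_scale3[OF \<alpha>] by simp
  hence "proportional (lincomb 1 a (dot3 lb v / dot3 la v) b) v" using \<alpha> unfolding proportional_def by blast
  thus ?thesis using ch proportional_sym by blast
qed

lemma frob_period_exists:
  assumes ch: "line_chart l a b la lb" and cr: "closed_rep q v" and pr: "proportional v (lincomb 1 a \<theta> b)"
  shows "\<exists>e. frob_period \<theta> e"
proof -
  let ?u = "lincomb 1 a \<theta> b"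
  have aF: "Fvec F a" "Fvec F b" using ch unfolding line_chart_def by auto
  obtain c where c: "c \<noteq> 0" "?u = scale3 c v" using pr unfolding proportional_def by blast
  obtain e0 c0 where e0: "0 < e0" "c0 \<noteq> 0" "(frobv q ^^ e0) v = scale3 c0 v"
    using cr unfolding closed_rep_def proportional_def by blast
  have "(frobv q ^^ e0) ?u = scale3 (c ^ q ^ e0 * c0 / c) ?u"
    using c e0(3) by (simp add: frobv_scale3 scale3_scale3)
  hence "lincomb 1 a (\<theta> ^ q ^ e0) b = scale3 (c ^ q ^ e0 * c0 / c) ?u"
    by (simp add: frobv_lincomb[OF aF])
  hence fix0: "\<theta> ^ q ^ e0 = \<theta>" using line_chart_coord[OF ch] by blast
  let ?P = "\<lambda>e. 0 < e \<and> \<theta> ^ q ^ e = \<theta>"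
  have "?P (LEAST e. ?P e)" using LeastI[of ?P e0] e0(1) fix0 by blast
  moreover have "\<forall>j. 0 < j \<and> j < (LEAST e. ?P e) \<longrightarrow> \<theta> ^ q ^ j \<noteq> \<theta>" using not_less_Least by blast
  ultimately show ?thesis unfolding frob_period_def by blast
qed

lemma cdeg_eq_frob_period:
  assumes ch: "line_chart l a b la lb" and pr: "proportional v (lincomb 1 a \<theta> b)"
    and per: "frob_period \<theta> e"
  shows "cdeg q v = e"
proof -
  have aF: "Fvec F a" "Fvec F b" using ch unfolding line_chart_def by auto
  have e: "0 < e" "\<theta> ^ q ^ e = \<theta>" using per unfolding frob_period_def by auto
  let ?pt = "\<lambda>i. ppt (lincomb 1 a (\<theta> ^ q ^ i) b)"
  have "cpt q (lincomb 1 a \<theta> b) = {?pt i |i. True}"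
    unfolding cpt_def by (simp add: frobv_lincomb[OF aF])
  also have "\<dots> = ?pt ` {..<e}"
  proof (intro equalityI subsetI)
    fix x assume "x \<in> {?pt i |i. True}"
    then obtain i where "x = ?pt i" by blast
    hence "x = ?pt (i mod e)" using frob_mod_period[OF e(2)] by simp
    thus "x \<in> ?pt ` {..<e}" using e(1) by simp
  qed auto
  finally have cu: "cpt q (lincomb 1 a \<theta> b) = ?pt ` {..<e}" .
  have "inj_on ?pt {..<e}"
  proof (rule inj_onI)
    fix i j assume "i \<in> {..<e}" "j \<in> {..<e}" and eq: "?pt i = ?pt j"
    obtain c where "lincomb 1 a (\<theta> ^ q ^ i) b = scale3 c (lincomb 1 a (\<theta> ^ q ^ j) b)"
      using proportional_of_ppt_eq[OF eq] unfolding proportional_def by blast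
    hence "\<theta> ^ q ^ i = \<theta> ^ q ^ j" using line_chart_coord[OF ch] by blast
    thus "i = j" using \<open>i \<in> {..<e}\<close> \<open>j \<in> {..<e}\<close>
      by (simp add: inj_on_eq_iff[OF inj_on_conjugates[OF per]])
  qed
  thus ?thesis unfolding cdeg_def cpt_proportional[OF pr] cu by (simp add: card_image)
qed

end

text \<open>On the line, \<open>homogenize D la lb R\<close> restricts to \<open>R\<close> in the affine coordinate \<open>lb / la\<close>.\<close>
definition homogenize :: "nat \<Rightarrow> 'k::field vec3 \<Rightarrow> 'k vec3 \<Rightarrow> 'k poly \<Rightarrow> mono3 \<Rightarrow> 'k" where
  "homogenize D la lb R =
     (\<lambda>m. \<Sum>i\<le>D. coeff R i * hmult (D - i) i (hlin_pow la (D - i)) (hlin_pow lb i) m)"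

lemma line_restr_homogenize: "line_restr D (homogenize D la lb R) p w =
   (\<Sum>i\<le>D. smult (coeff R i) ([:dot3 la p, dot3 la w:] ^ (D - i) * [:dot3 lb p, dot3 lb w:] ^ i))"
  unfolding homogenize_def line_restr_sum
proof (rule sum.cong[OF refl])
  fix i assume "i \<in> {..D}"
  hence D: "D = (D - i) + i" by simp
  have "line_restr D (hmult (D - i) i (hlin_pow la (D - i)) (hlin_pow lb i)) p w
      = [:dot3 la p, dot3 la w:] ^ (D - i) * [:dot3 lb p, dot3 lb w:] ^ i"
    by (subst D) (simp only: line_restr_hmult line_restr_hlin_pow)
  thus "line_restr D (\<lambda>m. coeff R i * hmult (D - i) i (hlin_pow la (D - i)) (hlin_pow lb i) m) p w =
      smult (coeff R i) ([:dot3 la p, dot3 la w:] ^ (D - i) * [:dot3 lb p, dot3 lb w:] ^ i)"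
    by (simp add: line_restr_cmult)
qed

lemma heval_homogenize:
  "heval D (homogenize D la lb R) x = (\<Sum>i\<le>D. coeff R i * dot3 la x ^ (D - i) * dot3 lb x ^ i)"
  using arg_cong[OF line_restr_homogenize[of D la lb R x x], of "\<lambda>r. coeff r 0"]
  by (simp add: coeff_line_restr_0 coeff_sum coeff_mult_0 coeff_linear_power_0 mult.assoc)

lemma poly_eq_sum_le: "degree (R :: 'k::field poly) \<le> D \<Longrightarrow> poly R x = (\<Sum>i\<le>D. coeff R i * x ^ i)"
proof -
  assume "degree R \<le> D"
  hence "poly R x = poly (\<Sum>i\<le>D. monom (coeff R i) i) x" using poly_as_sum_of_monoms' by metis
  thus ?thesis by (simp add: poly_sum poly_monom)
qed

lemma heval_homogenize_nonzero:
  assumes "degree R \<le> D" "dot3 la x \<noteq> 0"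
  shows "heval D (homogenize D la lb R) x = dot3 la x ^ D * poly R (dot3 lb x / dot3 la x)"
proof -
  let ?a = "dot3 la x" and ?b = "dot3 lb x"
  have "heval D (homogenize D la lb R) x = (\<Sum>i\<le>D. ?a ^ D * (coeff R i * (?b / ?a) ^ i))"
    unfolding heval_homogenize
  proof (rule sum.cong[OF refl])
    fix i assume "i \<in> {..D}"
    hence "?a ^ D = ?a ^ (D - i) * ?a ^ i" by (simp add: power_add[symmetric])
    thus "coeff R i * ?a ^ (D - i) * ?b ^ i = ?a ^ D * (coeff R i * (?b / ?a) ^ i)"
      using assms(2) by (simp add: power_divide field_simps)
  qed
  also have "\<dots> = ?a ^ D * poly R (?b / ?a)"
    using poly_eq_sum_le[OF assms(1)] by (simp add: sum_distrib_left)
  finally show ?thesis .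
qed

lemma heval_homogenize_zero:
  assumes "dot3 la x = 0" shows "heval D (homogenize D la lb R) x = coeff R D * dot3 lb x ^ D"
proof -
  have "heval D (homogenize D la lb R) x = (\<Sum>i\<le>D. if i = D then coeff R D * dot3 lb x ^ D else 0)"
    unfolding heval_homogenize assms by (rule sum.cong[OF refl]) auto
  thus ?thesis by simp
qed

context finite_subfield
begin

lemma homogenize_mem_hom_polys:
  assumes "Fvec F la" "Fvec F lb" "\<forall>k. coeff R k \<in> F"
  shows "homogenize D la lb R \<in> hom_polys F D"
  unfolding homogenize_def
proof (rule sum_mem_hom_polys)
  fix i assume "i \<in> {..D}"
  hence "hmult (D - i) i (hlin_pow la (D - i)) (hlin_pow lb i) \<in> hom_polys F D"
    using hmult_mem_hom_polys[OF hlin_pow_mem_hom_polys[OF assms(1)] hlin_pow_mem_hom_polys[OF assms(2)],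
        of "D - i" i] by simp
  thus "(\<lambda>m. coeff R i * hmult (D - i) i (hlin_pow la (D - i)) (hlin_pow lb i) m) \<in> hom_polys F D"
    using assms(3) by (intro cmult_mem_hom_polys) auto
qed

lemma jet_homogenize_chart_point:
  assumes ch: "line_chart l a b la lb" and dR: "degree R \<le> D"
  shows "jet D (homogenize D la lb R) (lincomb 1 a \<theta> b, b, (0, 0, 0))
    = (poly R \<theta>, poly (pderiv R) \<theta>, 0)"
proof -
  let ?u = "lincomb 1 a \<theta> b"
  have d: "dot3 la ?u = 1" "dot3 la b = 0" "dot3 lb ?u = \<theta>" "dot3 lb b = 1"
    using ch unfolding line_chart_def by (auto simp: dot3_lincomb)
  have "line_restr D (homogenize D la lb R) ?u b = (\<Sum>i\<le>D. smult (coeff R i) ([:\<theta>, 1:] ^ i))"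
    unfolding line_restr_homogenize d by (simp add: pCons_one)
  also have "\<dots> = pcompose R [:\<theta>, 1:]" using pcompose_eq_sum[OF dR] by simp
  finally have L: "line_restr D (homogenize D la lb R) ?u b = pcompose R [:\<theta>, 1:]" .
  show ?thesis
    using arg_cong[OF L, of "\<lambda>r. coeff r 0"] arg_cong[OF L, of "\<lambda>r. coeff r (Suc 0)"]
    by (simp add: coeff_line_restr_0 coeff_line_restr_1 coeff_pcompose_linear_1 hderiv_zero_dir)
qed

end

section \<open>Jet spaces and separation\<close>

context finite_subfield
begin

definition jet_space :: "'k site \<Rightarrow> 'k vec3 set \<Rightarrow> bool" where
  "jet_space S T \<longleftrightarrow> (\<forall>d. \<forall>f\<in>hom_polys F d. jet d f S \<in> T)
     \<and> (\<exists>D0. \<forall>D\<ge>D0. \<forall>y\<in>T. \<exists>g\<in>hom_polys F D. jet D g S = y)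
     \<and> (\<forall>h\<in>T. \<forall>y\<in>T. fst h \<noteq> 0 \<longrightarrow> jet_quot h y \<in> T)"

definition jet_separable :: "'k site \<Rightarrow> 'k vec3 \<Rightarrow> bool" where
  "jet_separable S x \<longleftrightarrow> (\<exists>\<delta> H. H \<in> hom_polys F \<delta> \<and> jet \<delta> H S = 0 \<and> heval \<delta> H x \<noteq> 0)"

lemma jet_space_rational_point:
  assumes fr: "point_frame Q b1 b2 m0 m1 m2"
  shows "jet_space (Q, b1, b2) (F \<times> F \<times> F)"
proof -
  have vF: "Fvec F Q" "Fvec F b1" "Fvec F b2" "Fvec F m0" "Fvec F m1" "Fvec F m2"
    using fr unfolding point_frame_def by auto
  have dots: "dot3 m0 Q = 1" "dot3 m0 b1 = 0" "dot3 m0 b2 = 0" "dot3 m1 Q = 0" "dot3 m1 b1 = 1"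
    "dot3 m1 b2 = 0" "dot3 m2 Q = 0" "dot3 m2 b1 = 0" "dot3 m2 b2 = 1"
    using fr unfolding point_frame_def by auto
  have onto: "\<exists>g\<in>hom_polys F (Suc D). jet (Suc D) g (Q, b1, b2) = y" if y: "y \<in> F \<times> F \<times> F" for D y
  proof -
    obtain y0 y1 y2 where y: "y = (y0, y1, y2)" "y0 \<in> F" "y1 \<in> F" "y2 \<in> F" using y by auto
    define A where "A = hlin_pow m0 (Suc D)"
    define B1 where "B1 = hmult D (Suc 0) (hlin_pow m0 D) (hlin m1)"
    define B2 where "B2 = hmult D (Suc 0) (hlin_pow m0 D) (hlin m2)"
    have "A \<in> hom_polys F (Suc D)" unfolding A_def by (rule hlin_pow_mem_hom_polys[OF vF(4)])
    moreover have "B1 \<in> hom_polys F (Suc D)" "B2 \<in> hom_polys F (Suc D)"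
      unfolding B1_def B2_def
      using hmult_mem_hom_polys[OF hlin_pow_mem_hom_polys hlin_mem_hom_polys, of m0 m1 D]
        hmult_mem_hom_polys[OF hlin_pow_mem_hom_polys hlin_mem_hom_polys, of m0 m2 D] vF
      by simp_all
    ultimately have g: "(\<lambda>m. y0 * A m + (y1 * B1 m + y2 * B2 m)) \<in> hom_polys F (Suc D)"
      using y by (intro add_mem_hom_polys cmult_mem_hom_polys)
    have "jet (Suc D) A (Q, b1, b2) = (1, 0, 0)"
      unfolding A_def by (simp add: heval_hlin_pow hderiv_hlin_pow dots del: hlin_pow.simps)
    moreover have "jet (Suc D) B1 (Q, b1, b2) = (0, 1, 0)" "jet (Suc D) B2 (Q, b1, b2) = (0, 0, 1)"
      unfolding B1_def B2_def
      by (simp_all add: heval_hmult[of D "Suc 0", simplified] hderiv_hmult[of D "Suc 0", simplified]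
          heval_hlin_pow heval_hlin hderiv_hlin dots del: hlin_pow.simps)
    ultimately have "jet (Suc D) (\<lambda>m. y0 * A m + (y1 * B1 m + y2 * B2 m)) (Q, b1, b2) = y"
      using y by (simp add: heval_add hderiv_add heval_cmult hderiv_cmult)
    thus ?thesis using g by blast
  qed
  have "\<forall>D\<ge>1. \<forall>y\<in>F \<times> F \<times> F. \<exists>g\<in>hom_polys F D. jet D g (Q, b1, b2) = y"
  proof (intro allI impI ballI)
    fix D :: nat and y assume "1 \<le> D" "y \<in> F \<times> F \<times> F"
    thus "\<exists>g\<in>hom_polys F D. jet D g (Q, b1, b2) = y" using onto by (cases D) auto
  qed
  hence "\<exists>D0. \<forall>D\<ge>D0. \<forall>y\<in>F \<times> F \<times> F. \<exists>g\<in>hom_polys F D. jet D g (Q, b1, b2) = y" by blast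
  moreover have "\<forall>d. \<forall>f\<in>hom_polys F d. jet d f (Q, b1, b2) \<in> F \<times> F \<times> F"
    using jet_mem_F vF(1-3) by blast
  moreover have "\<forall>h\<in>F \<times> F \<times> F. \<forall>y\<in>F \<times> F \<times> F. fst h \<noteq> 0 \<longrightarrow> jet_quot h y \<in> F \<times> F \<times> F"
    by (auto simp: jet_quot_def Let_def intro!: divide_mem diff_mem mult_mem)
  ultimately show ?thesis unfolding jet_space_def by (intro conjI)
qed

lemma jet_space_closed_point:
  assumes ch: "line_chart l a b la lb" and per: "frob_period \<theta> e"
  shows "jet_space (lincomb 1 a \<theta> b, b, (0, 0, 0)) (frob_fixed e \<times> frob_fixed e \<times> {0})"
proof -
  let ?u = "lincomb 1 a \<theta> b" and ?E = "frob_fixed e"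
  have F: "Fvec F a" "Fvec F b" "Fvec F la" "Fvec F lb" using ch unfolding line_chart_def by auto
  have e: "0 < e" "\<theta> ^ q ^ e = \<theta>" using per unfolding frob_period_def by auto
  have u: "(frobv q ^^ e) ?u = ?u" using frobv_lincomb[OF F(1,2)] e(2) by simp
  have "\<forall>d. \<forall>f\<in>hom_polys F d. jet d f (?u, b, (0, 0, 0)) \<in> ?E \<times> ?E \<times> {0}"
  proof (intro allI ballI)
    fix d f assume f: "f \<in> hom_polys F d"
    show "jet d f (?u, b, (0, 0, 0)) \<in> ?E \<times> ?E \<times> {0}"
      using heval_frob[OF f, of ?u e] hderiv_frob[OF f, of ?u b e] u frobv_Fvec[OF F(2)]
      unfolding frob_fixed_def by (simp add: hderiv_zero_dir)
  qed
  moreover have "\<exists>g\<in>hom_polys F D. jet D g (?u, b, (0, 0, 0)) = y"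
    if D: "2 * e - 1 \<le> D" and y: "y \<in> ?E \<times> ?E \<times> {0}" for D y
  proof -
    have "(fst y, fst (snd y)) \<in> value_slope \<theta> ` polys_le (2 * e - 1)"
      using y card_frob_fixed_and_value_slope_image(2)[OF per] by auto
    then obtain R where R: "R \<in> polys_le (2 * e - 1)" "value_slope \<theta> R = (fst y, fst (snd y))"
      by force
    hence "\<forall>k. coeff R k \<in> F" "degree R \<le> D" using D unfolding polys_le_def by auto
    thus ?thesis using y R(2) homogenize_mem_hom_polys[OF F(3,4)] jet_homogenize_chart_point[OF ch]
      unfolding value_slope_def by (intro bexI[of _ "homogenize D la lb R"]) auto
  qed
  hence "\<exists>D0. \<forall>D\<ge>D0. \<forall>y\<in>?E \<times> ?E \<times> {0}. \<exists>g\<in>hom_polys F D. jet D g (?u, b, (0, 0, 0)) = y"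
    by blast
  moreover have "\<forall>h\<in>?E \<times> ?E \<times> {0}. \<forall>y\<in>?E \<times> ?E \<times> {0}. fst h \<noteq> 0 \<longrightarrow> jet_quot h y \<in> ?E \<times> ?E \<times> {0}"
    by (auto simp: jet_quot_def Let_def intro!: frob_fixed_closed)
  ultimately show ?thesis unfolding jet_space_def by (intro conjI)
qed

lemma jet_separable_rational_point:
  assumes fr: "point_frame Q b1 b2 m0 m1 m2" and x: "x \<noteq> (0, 0, 0)" "\<not> proportional Q x"
  shows "jet_separable (Q, b1, b2) x"
proof -
  have "\<exists>m\<in>{m1, m2}. dot3 m x \<noteq> 0"
  proof (rule ccontr)
    assume "\<not> ?thesis"
    hence "dot3 m1 x = 0" "dot3 m2 x = 0" by auto
    moreover have "x = lincomb (dot3 m0 x) Q 1 (lincomb (dot3 m1 x) b1 (dot3 m2 x) b2)"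
      using fr unfolding point_frame_def by blast
    ultimately have "x = lincomb (dot3 m0 x) Q 1 (lincomb 0 b1 0 b2)" by simp
    hence "x = scale3 (dot3 m0 x) Q" by (simp add: lincomb_def scale3_def)
    moreover from this have "dot3 m0 x \<noteq> 0" using x(1) by (auto simp: scale3_def)
    ultimately show False using x(2) unfolding proportional_def by blast
  qed
  then obtain m where m: "Fvec F m" "dot3 m Q = 0" "dot3 m x \<noteq> 0"
    using fr unfolding point_frame_def by blast
  have "hmult (Suc 0) (Suc 0) (hlin m) (hlin m) \<in> hom_polys F (Suc 0 + Suc 0)"
    by (intro hmult_mem_hom_polys hlin_mem_hom_polys m(1))
  moreover have "jet (Suc 0 + Suc 0) (hmult (Suc 0) (Suc 0) (hlin m) (hlin m)) (Q, b1, b2) = 0"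
    using m(2) by (simp add: heval_hmult[of "Suc 0" "Suc 0", simplified]
        hderiv_hmult[of "Suc 0" "Suc 0", simplified] heval_hlin hderiv_hlin zero_prod_def)
  moreover have "heval (Suc 0 + Suc 0) (hmult (Suc 0) (Suc 0) (hlin m) (hlin m)) x \<noteq> 0"
    using m(3) by (simp add: heval_hmult[of "Suc 0" "Suc 0", simplified] heval_hlin)
  ultimately show ?thesis unfolding jet_separable_def by blast
qed

text \<open>Away from the line, \<open>l\<close> itself separates; on the line, the homogenized squared minimal
  polynomial of \<open>\<theta>\<close> vanishes only at the conjugates of the point.\<close>
lemma jet_separable_closed_point:
  assumes ch: "line_chart l a b la lb" and l: "Fvec F l" and per: "frob_period \<theta> e"
    and x: "x \<noteq> (0, 0, 0)" "dot3 l x \<noteq> 0 \<or> (\<forall>i. \<not> proportional ((frobv q ^^ i) (lincomb 1 a \<theta> b)) x)"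
  shows "jet_separable (lincomb 1 a \<theta> b, b, (0, 0, 0)) x"
proof (cases "dot3 l x = 0")
  case False
  have "dot3 l (lincomb 1 a \<theta> b) = 0" "dot3 l b = 0" using ch unfolding line_chart_def by (auto simp: dot3_lincomb)
  hence "jet (Suc 0) (hlin l) (lincomb 1 a \<theta> b, b, (0, 0, 0)) = 0"
    by (simp add: heval_hlin hderiv_hlin zero_prod_def dot3_def)
  moreover have "heval (Suc 0) (hlin l) x \<noteq> 0" using False by (simp add: heval_hlin)
  ultimately show ?thesis unfolding jet_separable_def using hlin_mem_hom_polys[OF l] by blast
next
  case True
  have F: "Fvec F a" "Fvec F b" "Fvec F la" "Fvec F lb" using ch unfolding line_chart_def by auto
  obtain R where R: "R \<in> polys_le (2 * e)" "degree R = 2 * e" "value_slope \<theta> R = (0, 0)"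
    and roots: "\<And>\<phi>. poly R \<phi> = 0 \<Longrightarrow> \<exists>i<e. \<phi> = \<theta> ^ q ^ i"
    using value_slope_kernel_poly[OF per] by blast
  define W where "W = homogenize (2 * e) la lb R"
  have W: "W \<in> hom_polys F (2 * e)"
    unfolding W_def using R(1) unfolding polys_le_def by (intro homogenize_mem_hom_polys F) auto
  have "jet (2 * e) W (lincomb 1 a \<theta> b, b, (0, 0, 0)) = 0"
    unfolding W_def jet_homogenize_chart_point[OF ch order.eq_iff[THEN iffD1, OF R(2), THEN conjunct1]]
    using R(3) unfolding value_slope_def by (simp add: zero_prod_def)
  moreover have "heval (2 * e) W x \<noteq> 0"
  proof (cases "dot3 la x = 0")
    case True
    have "x = lincomb (dot3 la x) a (dot3 lb x) b" using ch \<open>dot3 l x = 0\<close> unfolding line_chart_def by blast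
    hence "dot3 lb x \<noteq> 0" using x(1) True by (auto simp: lincomb_def)
    moreover have "R \<noteq> 0" using R(2) per unfolding frob_period_def by auto
    hence "coeff R (2 * e) \<noteq> 0" using R(2) leading_coeff_0_iff[of R] by simp
    ultimately show ?thesis unfolding W_def heval_homogenize_zero[OF True] by simp
  next
    case False
    have "poly R (dot3 lb x / dot3 la x) \<noteq> 0"
    proof
      assume "poly R (dot3 lb x / dot3 la x) = 0"
      then obtain i where i: "dot3 lb x / dot3 la x = \<theta> ^ q ^ i" using roots by blast
      have "x = lincomb (dot3 la x) a (dot3 lb x) b" using ch \<open>dot3 l x = 0\<close> unfolding line_chart_def by blast
      also have "\<dots> = scale3 (dot3 la x) ((frobv q ^^ i) (lincomb 1 a \<theta> b))"
        using lincomb_eq_scale3[OF False] i by (simp add: frobv_lincomb[OF F(1,2)])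
      finally have "proportional ((frobv q ^^ i) (lincomb 1 a \<theta> b)) x"
        using False unfolding proportional_def by blast
      thus False using x(2) \<open>dot3 l x = 0\<close> by blast
    qed
    thus ?thesis unfolding W_def using heval_homogenize_nonzero[of R "2 * e" la x lb] R(2) False by simp
  qed
  ultimately show ?thesis unfolding jet_separable_def using W by blast
qed

end

context finite_subfield
begin

text \<open>A closed point has a single tangent direction \<open>b\<close> along the line; the zero third direction
  makes its jets \<open>(f(u), D\<^sub>b f(u), 0)\<close>.\<close>
definition tangency_site :: "'k vec3 \<Rightarrow> 'k vec3 \<Rightarrow> 'k site \<Rightarrow> bool" where
  "tangency_site l v S \<longleftrightarrow> jet_space S (frob_fixed (cdeg q v) \<times> frob_fixed (cdeg q v) \<times> {0})
    \<and> (\<forall>d. \<forall>f\<in>hom_polys F d. tangent_at q d f l v \<longleftrightarrow> jet d f S = 0)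
    \<and> (\<forall>x. x \<noteq> (0, 0, 0) \<longrightarrow> dot3 l x \<noteq> 0 \<or> cpt q x \<noteq> cpt q v \<longrightarrow> jet_separable S x)
    \<and> fst S \<noteq> (0, 0, 0) \<and> dot3 l (fst S) = 0 \<and> cpt q (fst S) = cpt q v"

definition singularity_site :: "'k vec3 \<Rightarrow> 'k site \<Rightarrow> bool" where
  "singularity_site Q S \<longleftrightarrow> jet_space S (F \<times> F \<times> F) \<and> fst S = Q
    \<and> (\<forall>d f. singular_at d f Q \<longleftrightarrow> jet d f S = 0)
    \<and> (\<forall>x. x \<noteq> (0, 0, 0) \<longrightarrow> \<not> proportional Q x \<longrightarrow> jet_separable S x)"

lemma tangency_site_exists:
  assumes cr: "closed_rep q v" and l: "Fvec F l" "l \<noteq> (0, 0, 0)" and on: "dot3 l v = 0"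
  shows "\<exists>S. tangency_site l v S"
proof -
  have "v \<noteq> (0, 0, 0)" using cr unfolding closed_rep_def by blast
  then obtain a b la lb \<theta> where ch: "line_chart l a b la lb" and pr: "proportional v (lincomb 1 a \<theta> b)"
    using line_chart_through_point[OF l] on by blast
  obtain e where per: "frob_period \<theta> e" using frob_period_exists[OF ch cr pr] by blast
  have e: "cdeg q v = e" using cdeg_eq_frob_period[OF ch pr per] .
  let ?u = "lincomb 1 a \<theta> b"
  have F: "Fvec F a" "Fvec F b" using ch unfolding line_chart_def by auto
  have cu: "cpt q ?u = cpt q v" using cpt_proportional[OF pr] by simp
  have "jet_separable (?u, b, (0, 0, 0)) x"
    if x: "x \<noteq> (0, 0, 0)" "dot3 l x \<noteq> 0 \<or> cpt q x \<noteq> cpt q v" for x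
  proof (rule jet_separable_closed_point[OF ch l(1) per x(1)])
    have "cpt q x = cpt q v" if "proportional ((frobv q ^^ i) ?u) x" for i
    proof -
      have "(frobv q ^^ e) ?u = ?u" using per frobv_lincomb[OF F] unfolding frob_period_def by simp
      hence "cpt q ((frobv q ^^ i) ?u) = cpt q ?u" using per unfolding frob_period_def by (simp add: cpt_frobv)
      thus ?thesis using cpt_proportional[OF that] cu by simp
    qed
    thus "dot3 l x \<noteq> 0 \<or> (\<forall>i. \<not> proportional ((frobv q ^^ i) ?u) x)" using x(2) by blast
  qed
  moreover have "?u \<noteq> (0, 0, 0)" "dot3 l ?u = 0"
    using line_chart_point_nonzero[OF ch] ch unfolding line_chart_def by (auto simp: dot3_lincomb)
  moreover have "tangent_at q d f l v \<longleftrightarrow> jet d f (?u, b, (0, 0, 0)) = 0" if "f \<in> hom_polys F d" for d f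
    using tangent_at_iff_jet[OF ch pr that] by (simp add: zero_prod_def)
  ultimately show ?thesis using jet_space_closed_point[OF ch per] e cu unfolding tangency_site_def
    by (intro exI[of _ "(?u, b, (0, 0, 0))"]) simp
qed

lemma singularity_site_exists:
  assumes "Fvec F Q" "Q \<noteq> (0, 0, 0)"
  shows "\<exists>S. singularity_site Q S"
proof -
  obtain b1 b2 m0 m1 m2 where fr: "point_frame Q b1 b2 m0 m1 m2" using point_frame_exists[OF assms] by blast
  show ?thesis
    using jet_space_rational_point[OF fr] singular_at_iff_jet[OF fr] jet_separable_rational_point[OF fr]
    unfolding singularity_site_def by (intro exI[of _ "(Q, b1, b2)"]) (simp add: zero_prod_def)
qed

lemma card_frob_fixed_cdeg:
  assumes cr: "closed_rep q v" and l: "Fvec F l" "l \<noteq> (0, 0, 0)" and on: "dot3 l v = 0"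
  shows "card (frob_fixed (cdeg q v)) = q ^ cdeg q v"
proof -
  have "v \<noteq> (0, 0, 0)" using cr unfolding closed_rep_def by blast
  then obtain a b la lb \<theta> where ch: "line_chart l a b la lb" and pr: "proportional v (lincomb 1 a \<theta> b)"
    using line_chart_through_point[OF l] on by blast
  obtain e where per: "frob_period \<theta> e" using frob_period_exists[OF ch cr pr] by blast
  thus ?thesis using cdeg_eq_frob_period[OF ch pr per] card_frob_fixed_and_value_slope_image(1) by simp
qed

lemma configuration_separable:
  assumes SP: "\<forall>i<n. tangency_site (L i) (P i) (SP i)" and SQ: "\<forall>j<s. singularity_site (Q j) (SQ j)"
    and distP: "\<forall>i<n. \<forall>j<n. i \<noteq> j \<longrightarrow> cpt q (P i) \<noteq> cpt q (P j)"
    and distQ: "\<forall>j<s. \<forall>j'<s. j \<noteq> j' \<longrightarrow> \<not> proportional (Q j) (Q j')"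
    and off: "\<forall>i<n. \<forall>j<s. dot3 (L i) (Q j) \<noteq> 0" and Q0: "\<forall>j<s. Q j \<noteq> (0, 0, 0)"
  shows "\<forall>k\<in>{..<n} <+> {..<s}. \<forall>j\<in>{..<n} <+> {..<s}. j \<noteq> k \<longrightarrow>
    jet_separable (case_sum SP SQ j) (fst (case_sum SP SQ k))"
proof -
  have sepP: "jet_separable (SP i) x"
    if "i < n" "x \<noteq> (0, 0, 0)" "dot3 (L i) x \<noteq> 0 \<or> cpt q x \<noteq> cpt q (P i)" for i x
    using SP that unfolding tangency_site_def by blast
  have sepQ: "jet_separable (SQ j) x" if "j < s" "x \<noteq> (0, 0, 0)" "\<not> proportional (Q j) x" for j x
    using SQ that unfolding singularity_site_def by blast
  have ptP: "fst (SP i) \<noteq> (0, 0, 0)" "dot3 (L i) (fst (SP i)) = 0" "cpt q (fst (SP i)) = cpt q (P i)"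
    if "i < n" for i
    using SP that unfolding tangency_site_def by blast+
  have ptQ: "fst (SQ j) = Q j" if "j < s" for j
    using SQ that unfolding singularity_site_def by blast
  have PQ: "\<not> proportional (Q j) (fst (SP i))" if "i < n" "j < s" for i j
  proof
    assume "proportional (Q j) (fst (SP i))"
    then obtain c where "c \<noteq> 0" "fst (SP i) = scale3 c (Q j)" unfolding proportional_def by blast
    thus False using ptP(2)[OF that(1)] off that by (simp add: dot3_scale3)
  qed
  show ?thesis
  proof (intro ballI impI)
    fix k j assume k: "k \<in> {..<n} <+> {..<s}" and j: "j \<in> {..<n} <+> {..<s}" and jk: "j \<noteq> k"
    show "jet_separable (case_sum SP SQ j) (fst (case_sum SP SQ k))"
    proof (cases j)
      case (Inl i)
      hence i: "i < n" using j by auto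
      show ?thesis
      proof (cases k)
        case (Inl i')
        hence "i' < n" "i' \<noteq> i" using k jk \<open>j = Inl i\<close> by auto
        thus ?thesis using sepP[OF i ptP(1)] ptP(3) distP i Inl \<open>j = Inl i\<close> by simp
      next
        case (Inr j')
        hence "j' < s" using k by auto
        thus ?thesis using sepP[OF i] Q0 ptQ off i Inr \<open>j = Inl i\<close> by simp
      qed
    next
      case (Inr j')
      hence j': "j' < s" using j by auto
      show ?thesis
      proof (cases k)
        case (Inl i)
        hence "i < n" using k by auto
        thus ?thesis using sepQ[OF j' ptP(1)] PQ j' Inl \<open>j = Inr j'\<close> by simp
      next
        case (Inr j'')
        hence "j'' < s" "j'' \<noteq> j'" using k jk \<open>j = Inr j'\<close> by auto
        thus ?thesis using sepQ[OF j'] Q0 ptQ distQ j' Inr \<open>j = Inr j'\<close> by simp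
      qed
    qed
  qed
qed

lemma configuration_jets:
  assumes SP: "\<forall>i<n. tangency_site (L i) (P i) (SP i)" and SQ: "\<forall>j<s. singularity_site (Q j) (SQ j)"
  shows "\<forall>k\<in>{..<n} <+> {..<s}. jet_space (case_sum SP SQ k)
      (case_sum (\<lambda>i. frob_fixed (cdeg q (P i)) \<times> frob_fixed (cdeg q (P i)) \<times> {0}) (\<lambda>j::nat. F \<times> F \<times> F) k)"
    and "f \<in> hom_polys F d \<Longrightarrow> (\<forall>i<n. tangent_at q d f (L i) (P i)) \<and> (\<forall>j<s. singular_at d f (Q j))
      \<longleftrightarrow> (\<forall>k\<in>{..<n} <+> {..<s}. jet d f (case_sum SP SQ k) = 0)"
proof -
  have ball: "(\<forall>k\<in>{..<n} <+> {..<s}. \<Phi> k) \<longleftrightarrow> (\<forall>i<n. \<Phi> (Inl i)) \<and> (\<forall>j<s. \<Phi> (Inr j))" for \<Phi>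
    by auto
  have "jet_space (SP i) (frob_fixed (cdeg q (P i)) \<times> frob_fixed (cdeg q (P i)) \<times> {0})" if "i < n" for i
    using SP that unfolding tangency_site_def by blast
  moreover have "tangent_at q d f (L i) (P i) \<longleftrightarrow> jet d f (SP i) = 0"
    if "i < n" "f \<in> hom_polys F d" for i d f
    using SP that unfolding tangency_site_def by blast
  moreover have "jet_space (SQ j) (F \<times> F \<times> F)" "singular_at d f (Q j) \<longleftrightarrow> jet d f (SQ j) = 0"
    if "j < s" for j d f
    using SQ that unfolding singularity_site_def by blast+
  ultimately show "\<forall>k\<in>{..<n} <+> {..<s}. jet_space (case_sum SP SQ k)
      (case_sum (\<lambda>i. frob_fixed (cdeg q (P i)) \<times> frob_fixed (cdeg q (P i)) \<times> {0}) (\<lambda>j::nat. F \<times> F \<times> F) k)"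
    and "f \<in> hom_polys F d \<Longrightarrow> (\<forall>i<n. tangent_at q d f (L i) (P i)) \<and> (\<forall>j<s. singular_at d f (Q j))
      \<longleftrightarrow> (\<forall>k\<in>{..<n} <+> {..<s}. jet d f (case_sum SP SQ k) = 0)"
    unfolding ball by simp_all
qed

lemma card_jet_targets:
  fixes n s :: nat and e :: "nat \<Rightarrow> nat"
  assumes "\<And>i. i < n \<Longrightarrow> card (frob_fixed (e i)) = q ^ e i"
  shows "card (PiE ({..<n} <+> {..<s})
      (case_sum (\<lambda>i. frob_fixed (e i) \<times> frob_fixed (e i) \<times> {0}) (\<lambda>j::nat. F \<times> F \<times> F)))
    = q ^ (3 * s + (\<Sum>i<n. 2 * e i))"
proof -
  have "card (PiE ({..<n} <+> {..<s})
      (case_sum (\<lambda>i. frob_fixed (e i) \<times> frob_fixed (e i) \<times> {0}) (\<lambda>j::nat. F \<times> F \<times> F)))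
    = (\<Prod>i<n. q ^ (2 * e i)) * (\<Prod>j<s. q ^ 3)"
    using assms by (subst card_PiE)
      (simp_all add: prod.Plus o_def card_cartesian_product card_F mult_2 power_add power3_eq_cube mult.assoc)
  also have "\<dots> = q ^ (\<Sum>i<n. 2 * e i) * q ^ (3 * s)" by (simp add: power_sum power_mult)
  finally show ?thesis by (simp add: power_add mult.commute)
qed

end

section \<open>Counting\<close>

lemma card_eq_card_image_mult_card_kernel:
  fixes V :: "'a::ab_group_add set" and \<Phi> :: "'a \<Rightarrow> 'b"
  assumes fin: "finite V" and zero: "0 \<in> V" and diff: "\<And>f g. f \<in> V \<Longrightarrow> g \<in> V \<Longrightarrow> f - g \<in> V"
    and hom: "\<And>f g. f \<in> V \<Longrightarrow> g \<in> V \<Longrightarrow> \<Phi> f = \<Phi> g \<longleftrightarrow> \<Phi> (f - g) = \<Phi> 0"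
  shows "card V = card (\<Phi> ` V) * card {f \<in> V. \<Phi> f = \<Phi> 0}"
proof -
  let ?K = "{f \<in> V. \<Phi> f = \<Phi> 0}"
  have add: "g + h \<in> V" if "g \<in> V" "h \<in> V" for g h
    using diff[OF that(1) diff[OF zero that(2)]] by simp
  have fiber: "{f \<in> V. \<Phi> f = \<Phi> g} = (\<lambda>h. g + h) ` ?K" if g: "g \<in> V" for g
  proof (intro equalityI subsetI)
    fix f assume f: "f \<in> {f \<in> V. \<Phi> f = \<Phi> g}"
    hence "f - g \<in> ?K" using diff[OF _ g] hom[OF _ g] by auto
    moreover have "f = g + (f - g)" by simp
    ultimately show "f \<in> (\<lambda>h. g + h) ` ?K" by blast
  next
    fix f assume "f \<in> (\<lambda>h. g + h) ` ?K"
    then obtain h where h: "h \<in> V" "\<Phi> h = \<Phi> 0" "f = g + h" by blast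
    thus "f \<in> {f \<in> V. \<Phi> f = \<Phi> g}" using add[OF g h(1)] hom[OF add[OF g h(1)] g] by simp
  qed
  have "card V = card (\<Union>y\<in>\<Phi> ` V. {f \<in> V. \<Phi> f = y})" by (rule arg_cong[of _ _ card]) blast
  also have "\<dots> = (\<Sum>y\<in>\<Phi> ` V. card {f \<in> V. \<Phi> f = y})"
    by (rule card_UN_disjoint) (use fin in auto)
  also have "\<dots> = (\<Sum>y\<in>\<Phi> ` V. card ?K)"
  proof (rule sum.cong[OF refl])
    fix y assume "y \<in> \<Phi> ` V"
    then obtain g where g: "g \<in> V" "y = \<Phi> g" by blast
    have "inj_on (\<lambda>h. g + h) ?K" by (auto simp: inj_on_def)
    thus "card {f \<in> V. \<Phi> f = y} = card ?K" unfolding g(2) fiber[OF g(1)] by (rule card_image)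
  qed
  finally show ?thesis by simp
qed

lemma bchoice3: "\<forall>k\<in>I. \<exists>a b c. P k a b c \<Longrightarrow> \<exists>a b c. \<forall>k\<in>I. P k (a k) (b k) (c k)"
  by metis

context finite_subfield
begin

lemma jet_separable_prod:
  assumes "finite J" "\<forall>j\<in>J. jet_separable (S j) x"
  shows "\<exists>\<delta> H. H \<in> hom_polys F \<delta> \<and> (\<forall>j\<in>J. jet \<delta> H (S j) = 0) \<and> heval \<delta> H x \<noteq> 0"
  using assms
proof (induction J rule: finite_induct)
  case empty
  show ?case by (intro exI[of _ 0] exI[of _ hone]) (simp add: hone_mem_hom_polys heval_hone)
next
  case (insert j J)
  obtain \<delta>1 H1 where 1: "H1 \<in> hom_polys F \<delta>1" "jet \<delta>1 H1 (S j) = 0" "heval \<delta>1 H1 x \<noteq> 0"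
    using insert.prems unfolding jet_separable_def by blast
  obtain \<delta>2 H2 where 2: "H2 \<in> hom_polys F \<delta>2" "\<forall>j\<in>J. jet \<delta>2 H2 (S j) = 0" "heval \<delta>2 H2 x \<noteq> 0"
    using insert.IH insert.prems by blast
  have "hmult \<delta>1 \<delta>2 H1 H2 \<in> hom_polys F (\<delta>1 + \<delta>2)" using hmult_mem_hom_polys 1 2 by blast
  moreover have "\<forall>j'\<in>insert j J. jet (\<delta>1 + \<delta>2) (hmult \<delta>1 \<delta>2 H1 H2) (S j') = 0"
    using jet_hmult_zero_left[OF 1(2)] jet_hmult_zero_right 2(2) by blast
  moreover have "heval (\<delta>1 + \<delta>2) (hmult \<delta>1 \<delta>2 H1 H2) x \<noteq> 0" using 1 2 by (simp add: heval_hmult)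
  ultimately show ?case by blast
qed

lemma jet_space_hmult_onto:
  assumes "jet_space S T"
  shows "\<exists>D0. \<forall>D\<ge>D0. \<forall>\<delta> H. H \<in> hom_polys F \<delta> \<longrightarrow> heval \<delta> H (fst S) \<noteq> 0 \<longrightarrow>
    (\<forall>y\<in>T. \<exists>g\<in>hom_polys F D. jet (\<delta> + D) (hmult \<delta> D H g) S = y)"
proof -
  obtain D0 where D0: "\<forall>D\<ge>D0. \<forall>y\<in>T. \<exists>g\<in>hom_polys F D. jet D g S = y"
    using assms unfolding jet_space_def by blast
  have "\<exists>g\<in>hom_polys F D. jet (\<delta> + D) (hmult \<delta> D H g) S = y"
    if D: "D0 \<le> D" and H: "H \<in> hom_polys F \<delta>" and h0: "heval \<delta> H (fst S) \<noteq> 0" and y: "y \<in> T"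
    for D \<delta> H y
  proof -
    have "jet \<delta> H S \<in> T" "jet_quot (jet \<delta> H S) y \<in> T"
      using assms H h0 y unfolding jet_space_def by (auto simp: fst_jet)
    then obtain g where g: "g \<in> hom_polys F D" "jet D g S = jet_quot (jet \<delta> H S) y" using D0 D by blast
    have "jet (\<delta> + D) (hmult \<delta> D H g) S = y"
      using h0 g(2) by (intro jet_hmult_quot) (simp_all add: fst_jet)
    thus ?thesis using g(1) by blast
  qed
  thus ?thesis by blast
qed

text \<open>A Chinese remainder theorem for jets: each site is served by a multiple of a form that
  kills all other sites, and these forms are added up.\<close>
lemma jets_onto:
  assumes I: "finite I" and sp: "\<forall>k\<in>I. jet_space (S k) (T k)"
    and sep: "\<forall>k\<in>I. \<forall>j\<in>I. j \<noteq> k \<longrightarrow> jet_separable (S j) (fst (S k))"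
  shows "\<exists>d0. \<forall>d\<ge>d0. (\<lambda>f. restrict (\<lambda>k. jet d f (S k)) I) ` hom_polys F d = PiE I T"
proof -
  have ex: "\<forall>k\<in>I. \<exists>\<delta> H D0. H \<in> hom_polys F \<delta> \<and> (\<forall>j\<in>I - {k}. jet \<delta> H (S j) = 0)
      \<and> (\<forall>D\<ge>D0. \<forall>y\<in>T k. \<exists>g\<in>hom_polys F D. jet (\<delta> + D) (hmult \<delta> D H g) (S k) = y)"
  proof
    fix k assume k: "k \<in> I"
    have "\<forall>j\<in>I - {k}. jet_separable (S j) (fst (S k))" using sep k by blast
    then obtain \<delta> H where H: "H \<in> hom_polys F \<delta>" "\<forall>j\<in>I - {k}. jet \<delta> H (S j) = 0"
      "heval \<delta> H (fst (S k)) \<noteq> 0"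
      using jet_separable_prod[of "I - {k}" S "fst (S k)"] I by blast
    obtain D0 where "\<forall>D\<ge>D0. \<forall>\<delta> H. H \<in> hom_polys F \<delta> \<longrightarrow> heval \<delta> H (fst (S k)) \<noteq> 0 \<longrightarrow>
        (\<forall>y\<in>T k. \<exists>g\<in>hom_polys F D. jet (\<delta> + D) (hmult \<delta> D H g) (S k) = y)"
      using jet_space_hmult_onto sp k by blast
    hence "\<forall>D\<ge>D0. \<forall>y\<in>T k. \<exists>g\<in>hom_polys F D. jet (\<delta> + D) (hmult \<delta> D H g) (S k) = y"
      using H(1,3) by blast
    thus "\<exists>\<delta> H D0. H \<in> hom_polys F \<delta> \<and> (\<forall>j\<in>I - {k}. jet \<delta> H (S j) = 0)
      \<and> (\<forall>D\<ge>D0. \<forall>y\<in>T k. \<exists>g\<in>hom_polys F D. jet (\<delta> + D) (hmult \<delta> D H g) (S k) = y)"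
      using H(1,2) by blast
  qed
  obtain \<delta> H D0 where H_mem: "\<And>k. k \<in> I \<Longrightarrow> H k \<in> hom_polys F (\<delta> k)"
    and H_kills: "\<And>k j. k \<in> I \<Longrightarrow> j \<in> I - {k} \<Longrightarrow> jet (\<delta> k) (H k) (S j) = 0"
    and H_onto: "\<And>k D y. k \<in> I \<Longrightarrow> D0 k \<le> D \<Longrightarrow> y \<in> T k \<Longrightarrow>
      \<exists>g\<in>hom_polys F D. jet (\<delta> k + D) (hmult (\<delta> k) D (H k) g) (S k) = y"
    using bchoice3[OF ex] by blast
  have "(\<lambda>f. restrict (\<lambda>k. jet d f (S k)) I) ` hom_polys F d = PiE I T"
    if d: "(\<Sum>k\<in>I. \<delta> k + D0 k) \<le> d" for d
  proof
    show "(\<lambda>f. restrict (\<lambda>k. jet d f (S k)) I) ` hom_polys F d \<subseteq> PiE I T"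
    proof (rule image_subsetI)
      fix f assume "f \<in> hom_polys F d"
      hence "\<forall>k\<in>I. jet d f (S k) \<in> T k" using sp unfolding jet_space_def by blast
      thus "restrict (\<lambda>k. jet d f (S k)) I \<in> PiE I T" by (simp add: restrict_PiE_iff)
    qed
    show "PiE I T \<subseteq> (\<lambda>f. restrict (\<lambda>k. jet d f (S k)) I) ` hom_polys F d"
    proof
      fix y assume y: "y \<in> PiE I T"
      have ex_f: "\<forall>k\<in>I. \<exists>f\<in>hom_polys F d. \<forall>j\<in>I. jet d f (S j) = (if j = k then y k else 0)"
      proof
        fix k assume k: "k \<in> I"
        have "\<delta> k + D0 k \<le> d" using d member_le_sum[OF k, of "\<lambda>k. \<delta> k + D0 k"] I by simp
        hence dk: "\<delta> k + (d - \<delta> k) = d" "D0 k \<le> d - \<delta> k" by simp_all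
        obtain g where g: "g \<in> hom_polys F (d - \<delta> k)"
          "jet (\<delta> k + (d - \<delta> k)) (hmult (\<delta> k) (d - \<delta> k) (H k) g) (S k) = y k"
          using H_onto[OF k dk(2) PiE_mem[OF y k]] by blast
        let ?f = "hmult (\<delta> k) (d - \<delta> k) (H k) g"
        have "?f \<in> hom_polys F d" using hmult_mem_hom_polys[OF H_mem[OF k] g(1)] unfolding dk(1) .
        moreover have "jet d ?f (S j) = (if j = k then y k else 0)" if "j \<in> I" for j
          using g(2) jet_hmult_zero_left[OF H_kills[OF k], of j "d - \<delta> k" g] that unfolding dk(1) by auto
        ultimately show "\<exists>f\<in>hom_polys F d. \<forall>j\<in>I. jet d f (S j) = (if j = k then y k else 0)" by blast
      qed
      obtain f where f: "\<And>k. k \<in> I \<Longrightarrow> f k \<in> hom_polys F d"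
        "\<And>k j. k \<in> I \<Longrightarrow> j \<in> I \<Longrightarrow> jet d (f k) (S j) = (if j = k then y k else 0)"
        using bchoice[OF ex_f[unfolded Bex_def]] by blast
      have "y = restrict (\<lambda>j. jet d (\<lambda>m. \<Sum>k\<in>I. f k m) (S j)) I"
      proof (rule ext)
        fix j show "y j = restrict (\<lambda>j. jet d (\<lambda>m. \<Sum>k\<in>I. f k m) (S j)) I j"
        proof (cases "j \<in> I")
          case True
          have "jet d (\<lambda>m. \<Sum>k\<in>I. f k m) (S j) = (\<Sum>k\<in>I. jet d (f k) (S j))" by (rule jet_sum)
          also have "\<dots> = (\<Sum>k\<in>I. if j = k then y k else 0)"
            by (rule sum.cong[OF refl]) (simp add: f(2) True)
          also have "\<dots> = y j" using True I by simp
          finally show ?thesis using True by simp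
        next
          case False
          thus ?thesis using PiE_arb[OF y False] by simp
        qed
      qed
      moreover have "(\<lambda>m. \<Sum>k\<in>I. f k m) \<in> hom_polys F d" using f(1) by (rule sum_mem_hom_polys)
      ultimately show "y \<in> (\<lambda>f. restrict (\<lambda>k. jet d f (S k)) I) ` hom_polys F d" by (rule image_eqI)
    qed
  qed
  thus ?thesis by blast
qed

lemma mu_d_eq_inverse_card:
  assumes onto: "(\<lambda>f. restrict (\<lambda>k. jet d f (S k)) I) ` hom_polys F d = T"
    and A: "\<And>f. f \<in> hom_polys F d \<Longrightarrow> A d f \<longleftrightarrow> (\<forall>k\<in>I. jet d f (S k) = 0)"
  shows "mu_d F d A = 1 / card T"
proof -
  let ?\<Phi> = "\<lambda>f. restrict (\<lambda>k. jet d f (S k)) I" and ?V = "hom_polys F d"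
  have eq_iff: "?\<Phi> f = ?\<Phi> g \<longleftrightarrow> (\<forall>k\<in>I. jet d f (S k) = jet d g (S k))" for f g
    by (auto simp: fun_eq_iff restrict_def)
  have \<Phi>0: "?\<Phi> f = ?\<Phi> 0 \<longleftrightarrow> (\<forall>k\<in>I. jet d f (S k) = 0)" for f
    unfolding eq_iff by (simp add: jet_zero)
  have "card ?V = card T * card {f \<in> ?V. ?\<Phi> f = ?\<Phi> 0}"
    unfolding onto[symmetric]
  proof (rule card_eq_card_image_mult_card_kernel)
    show "finite ?V" "0 \<in> ?V" by (rule finite_hom_polys, rule zero_mem_hom_polys)
    show "f - g \<in> ?V" if "f \<in> ?V" "g \<in> ?V" for f g using that by (rule diff_mem_hom_polys)
    show "?\<Phi> f = ?\<Phi> g \<longleftrightarrow> ?\<Phi> (f - g) = ?\<Phi> 0" for f g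
      unfolding eq_iff \<Phi>0 by (simp add: jet_diff jet_zero)
  qed
  moreover have "{f \<in> ?V. A d f} = {f \<in> ?V. ?\<Phi> f = ?\<Phi> 0}" using A \<Phi>0 by blast
  moreover have "0 < card {f \<in> ?V. ?\<Phi> f = ?\<Phi> 0}"
    using finite_hom_polys zero_mem_hom_polys by (subst card_gt_0_iff) auto
  ultimately show ?thesis unfolding mu_d_def by (simp add: field_simps)
qed

end

theorem lemma4p4:
  fixes F :: "'k::field set" and q n s :: nat and P L Q :: "nat \<Rightarrow> 'k vec3"
  assumes "alg_closed TYPE('k)"
    and "is_subfield F" and "finite F" and "card F = q"
    and "\<forall>i<n. closed_rep q (P i)"
    and "\<forall>i<n. \<forall>j<n. i \<noteq> j \<longrightarrow> cpt q (P i) \<noteq> cpt q (P j)"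
    and "\<forall>i<n. Fvec F (L i) \<and> L i \<noteq> (0,0,0)"
    and "\<forall>i<n. dot3 (L i) (P i) = 0"
    and "\<forall>j<s. Fvec F (Q j) \<and> Q j \<noteq> (0,0,0)"
    and "\<forall>j<s. \<forall>j'<s. j \<noteq> j' \<longrightarrow> \<not> proportional (Q j) (Q j')"
    and "\<forall>i<n. \<forall>j<s. dot3 (L i) (Q j) \<noteq> 0"
  defines "A \<equiv> (\<lambda>d f. (\<forall>i<n. tangent_at q d f (L i) (P i)) \<and> (\<forall>j<s. singular_at d f (Q j)))"
  shows "(\<exists>d0. \<forall>d\<ge>d0. mu_d F d A = 1 / real q ^ (3 * s + (\<Sum>i<n. 2 * cdeg q (P i))))
     \<and> (\<lambda>d. mu_d F d A) \<longlonglongrightarrow> 1 / real q ^ (3 * s + (\<Sum>i<n. 2 * cdeg q (P i)))"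
proof -
  interpret finite_subfield F q using assms(2-4) by unfold_locales
  let ?I = "{..<n} <+> {..<s}" and ?c = "3 * s + (\<Sum>i<n. 2 * cdeg q (P i))"
  let ?T = "case_sum (\<lambda>i. frob_fixed (cdeg q (P i)) \<times> frob_fixed (cdeg q (P i)) \<times> {0}) (\<lambda>j::nat. F \<times> F \<times> F)"
  have "\<forall>i\<in>{..<n}. \<exists>S. tangency_site (L i) (P i) S" using tangency_site_exists assms(5,7,8) by blast
  from bchoice[OF this] obtain SP where SP: "\<forall>i<n. tangency_site (L i) (P i) (SP i)" by auto
  have "\<forall>j\<in>{..<s}. \<exists>S. singularity_site (Q j) S" using singularity_site_exists assms(9) by blast
  from bchoice[OF this] obtain SQ where SQ: "\<forall>j<s. singularity_site (Q j) (SQ j)" by auto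
  have "finite ?I" by simp
  from jets_onto[OF this configuration_jets(1)[OF SP SQ] configuration_separable[OF SP SQ assms(6,10,11)]]
  obtain d0 where onto: "\<And>d. d0 \<le> d \<Longrightarrow>
      (\<lambda>f. restrict (\<lambda>k. jet d f (case_sum SP SQ k)) ?I) ` hom_polys F d = PiE ?I ?T"
    using assms(9) by blast
  have "card (frob_fixed (cdeg q (P i))) = q ^ cdeg q (P i)" if "i < n" for i
    using card_frob_fixed_cdeg assms(5,7,8) that by blast
  note card = card_jet_targets[of n "\<lambda>i. cdeg q (P i)", OF this]
  have mu: "mu_d F d A = 1 / real q ^ ?c" if "d0 \<le> d" for d
  proof -
    have "mu_d F d A = 1 / card (PiE ?I ?T)"
      by (rule mu_d_eq_inverse_card[where S = "case_sum SP SQ"])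
        (simp_all add: onto that A_def configuration_jets(2)[OF SP SQ])
    thus ?thesis using card by simp
  qed
  hence "eventually (\<lambda>d. mu_d F d A = 1 / real q ^ ?c) sequentially"
    unfolding eventually_sequentially by blast
  hence "(\<lambda>d. mu_d F d A) \<longlonglongrightarrow> 1 / real q ^ ?c" by (rule tendsto_eventually)
  thus ?thesis using mu by blast
qed

end
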